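(* Let $F$ be a $4$-regular graph, let $E\subseteq E(F)$ be based in $F$, let $C$ be an oriented Euler system of $F$, let $D$ be a directed version of $F$, and let $\mathbf o$ be a transitional orientation of $F$. Then for each transversal $T$ of $\mathfrak T(F)$, the submatrix of $\mathrm{CM}(F,\Gamma_{E,C},D)\cdot\Delta_{D,\mathbf o}$ formed by the columns in $T$ has determinant $-1$, $0$, or $1$.
   Context: Graphs: $G=(V,H,E,\epsilon)$ with finite sets of vertices $V$ and half-edges $H$, a partition $E$ of $H$ into unordered pairs (edges), and $\epsilon:H\to V$; loops and multiple edges allowed. $E'\subseteq E(G)$ is based in $G$ if it contains exactly one edge of each connected component of $G$. A directed version orders each edge as (tail, head). A single transition is an unordered pair of distinct half-edges incident with a common vertex; a directed single transition is such an ordered pair. A closed walk is a sequence $((h_1,h_2),\dots,(h_{n-1},h_n))$ of directed single transitions with $\{h_2,h_3\},\{h_4,h_5\},\dots,\{h_n,h_1\}$ edges, up to cyclic shift. $\sigma(D,W)\in\mathbb Z^{E}$ counts, at each edge, traversals by $W$ along its direction in $D$ minus traversals against it. An oriented circuit is a nonempty closed walk in which each half-edge occurs at most once. For a set $\Gamma$ of closed walks, $\mathrm{CM}(G,\Gamma,D)$ is the $\Gamma\times E(G)$ matrix whose row indexed by $W$ is $\sigma(D,W)$ (rows/columns unordered; determinants are defined up to sign). $F$ is $4$-regular if every vertex is incident with exactly $4$ half-edges. A transition at $v$ is a partition of the four half-edges at $v$ into two single transitions; $\mathfrak T(F)$ is the set of transitions, and a transversal of $\mathfrak T(F)$ contains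 exactly one transition at each vertex. A transitional orientation $\mathbf o$ assigns to each transition $t$ one of its two single transitions $\mathbf o(t)$. $\Delta_{D,\mathbf o}$ is the $E(F)\times\mathfrak T(F)$ matrix over $\mathbb Q$ whose $(e,t)$ entry is $1$ if $e\cap\mathbf o(t)=\{h\}$ with $h$ the tail of $e$ in $D$, $-1$ if $e\cap\mathbf o(t)=\{h\}$ with $h$ the head, and $0$ otherwise. An oriented Euler system of $F$ consists of one oriented Eulerian circuit for each connected component of $F$; it visits each vertex exactly twice. For a vertex $v$, the oriented circuit induced by $C$ at $v$ based on $E$ is the segment from $v$ back to $v$ of the oriented Eulerian circuit of the component of $v$ that does not traverse the edge of $E$ in that component. $\Gamma_{E,C}$ is the set of these oriented circuits over all $v\in V(F)$. *)

theory Defs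
  imports Complex_Main "HOL-Combinatorics.Permutations"
begin

(* A graph G = (V,H,E,eps): vertices V, half-edges H, E a partition of H into
   unordered pairs, eps : H -> V.  Loops and multiple edges allowed. *)
definition is_graph :: "'v set \<Rightarrow> 'h set \<Rightarrow> 'h set set \<Rightarrow> ('h \<Rightarrow> 'v) \<Rightarrow> bool" where
  "is_graph V H E eps \<longleftrightarrow> finite V \<and> finite H \<and>
     (\<forall>e\<in>E. e \<subseteq> H \<and> card e = 2) \<and> (\<forall>h\<in>H. \<exists>!e. e \<in> E \<and> h \<in> e) \<and>
     (\<forall>h\<in>H. eps h \<in> V)"

definition halfedges_at :: "'h set \<Rightarrow> ('h \<Rightarrow> 'v) \<Rightarrow> 'v \<Rightarrow> 'h set" where
  "halfedges_at H eps v = {h\<in>H. eps h = v}"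

definition four_regular :: "'v set \<Rightarrow> 'h set \<Rightarrow> ('h \<Rightarrow> 'v) \<Rightarrow> bool" where
  "four_regular V H eps \<longleftrightarrow> (\<forall>v\<in>V. card (halfedges_at H eps v) = 4)"

definition adj_rel :: "'h set set \<Rightarrow> ('h \<Rightarrow> 'v) \<Rightarrow> ('v \<times> 'v) set" where
  "adj_rel E eps = {(eps h, eps h') | h h' e. e \<in> E \<and> h \<in> e \<and> h' \<in> e}"

definition same_comp :: "'h set set \<Rightarrow> ('h \<Rightarrow> 'v) \<Rightarrow> 'v \<Rightarrow> 'v \<Rightarrow> bool" where
  "same_comp E eps v w \<longleftrightarrow> (v, w) \<in> (adj_rel E eps)\<^sup>*"

definition comp_halfedges :: "'h set \<Rightarrow> 'h set set \<Rightarrow> ('h \<Rightarrow> 'v) \<Rightarrow> 'v \<Rightarrow> 'h set" where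
  "comp_halfedges H E eps v = {h\<in>H. same_comp E eps v (eps h)}"

definition based :: "'v set \<Rightarrow> 'h set set \<Rightarrow> ('h \<Rightarrow> 'v) \<Rightarrow> 'h set set \<Rightarrow> bool" where
  "based V E eps Eb \<longleftrightarrow> Eb \<subseteq> E \<and>
     (\<forall>v\<in>V. \<exists>!e. e \<in> Eb \<and> (\<forall>h\<in>e. same_comp E eps v (eps h)))"

(* a directed version, given by the tail of each edge; the head is the other half-edge *)
definition directed_version :: "'h set set \<Rightarrow> ('h set \<Rightarrow> 'h) \<Rightarrow> bool" where
  "directed_version E tail \<longleftrightarrow> (\<forall>e\<in>E. tail e \<in> e)"

definition head_of :: "('h set \<Rightarrow> 'h) \<Rightarrow> 'h set \<Rightarrow> 'h" where
  "head_of tail e = (THE h. h \<in> e \<and> h \<noteq> tail e)"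

definition dir_single_transition :: "'h set \<Rightarrow> ('h \<Rightarrow> 'v) \<Rightarrow> 'h \<times> 'h \<Rightarrow> bool" where
  "dir_single_transition H eps p \<longleftrightarrow>
     fst p \<in> H \<and> snd p \<in> H \<and> fst p \<noteq> snd p \<and> eps (fst p) = eps (snd p)"

(* closed walks ((h1,h2),...,(h_{n-1},h_n)) represented by a list of directed single
   transitions; the edge traversed after the i-th transition is
   {snd (W!i), fst (W!((i+1) mod length W))} *)
definition walk_edge :: "('h \<times> 'h) list \<Rightarrow> nat \<Rightarrow> 'h set" where
  "walk_edge W i = {snd (W ! i), fst (W ! ((i + 1) mod length W))}"

definition closed_walk :: "'h set \<Rightarrow> 'h set set \<Rightarrow> ('h \<Rightarrow> 'v) \<Rightarrow> ('h \<times> 'h) list \<Rightarrow> bool" where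
  "closed_walk H E eps W \<longleftrightarrow> (\<forall>p\<in>set W. dir_single_transition H eps p) \<and>
     (\<forall>i<length W. walk_edge W i \<in> E)"

definition walk_halfedges :: "('h \<times> 'h) list \<Rightarrow> 'h list" where
  "walk_halfedges W = concat (map (\<lambda>p. [fst p, snd p]) W)"

definition walk_edges :: "('h \<times> 'h) list \<Rightarrow> 'h set set" where
  "walk_edges W = {walk_edge W i | i. i < length W}"

definition oriented_circuit :: "'h set \<Rightarrow> 'h set set \<Rightarrow> ('h \<Rightarrow> 'v) \<Rightarrow> ('h \<times> 'h) list \<Rightarrow> bool" where
  "oriented_circuit H E eps W \<longleftrightarrow> W \<noteq> [] \<and> closed_walk H E eps W \<and> distinct (walk_halfedges W)"

definition sigma :: "('h set \<Rightarrow> 'h) \<Rightarrow> ('h \<times> 'h) list \<Rightarrow> 'h set \<Rightarrow> int" where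
  "sigma tail W e = (\<Sum>i<length W.
      if walk_edge W i = e then (if snd (W ! i) = tail e then 1 else -1) else 0)"

definition oriented_euler_system ::
  "'v set \<Rightarrow> 'h set \<Rightarrow> 'h set set \<Rightarrow> ('h \<Rightarrow> 'v) \<Rightarrow> ('h \<times> 'h) list set \<Rightarrow> bool" where
  "oriented_euler_system V H E eps C \<longleftrightarrow>
     (\<forall>W\<in>C. oriented_circuit H E eps W \<and>
        (\<exists>v\<in>V. set (walk_halfedges W) = comp_halfedges H E eps v)) \<and>
     (\<forall>v\<in>V. \<exists>!W. W \<in> C \<and> set (walk_halfedges W) = comp_halfedges H E eps v)"

(* Z is (a representative, up to cyclic shift, of) the oriented circuit induced by C at v
   based on Eb: the segment from v back to v of the Eulerian circuit of the component of v
   that does not traverse the edge of Eb in that component *)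
definition induced_circuit ::
  "'h set \<Rightarrow> 'h set set \<Rightarrow> ('h \<Rightarrow> 'v) \<Rightarrow> 'h set set \<Rightarrow> ('h \<times> 'h) list set \<Rightarrow> 'v
     \<Rightarrow> ('h \<times> 'h) list \<Rightarrow> bool" where
  "induced_circuit H E eps Eb C v Z \<longleftrightarrow>
     (\<exists>W\<in>C. set (walk_halfedges W) = comp_halfedges H E eps v \<and>
       (\<exists>k p1 X p2 Y. rotate k W = p1 # X @ p2 # Y \<and>
          eps (fst p1) = v \<and> eps (fst p2) = v \<and>
          (\<forall>p\<in>set X \<union> set Y. eps (fst p) \<noteq> v) \<and>
          Z = (fst p2, snd p1) # X \<and>
          (\<forall>e\<in>Eb. e \<notin> walk_edges Z)))"

definition Gamma_EC ::
  "'h set \<Rightarrow> 'h set set \<Rightarrow> ('h \<Rightarrow> 'v) \<Rightarrow> 'h set set \<Rightarrow> ('h \<times> 'h) list set \<Rightarrow> 'v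
     \<Rightarrow> ('h \<times> 'h) list" where
  "Gamma_EC H E eps Eb C v = (SOME Z. induced_circuit H E eps Eb C v Z)"

definition transition_at :: "'h set \<Rightarrow> ('h \<Rightarrow> 'v) \<Rightarrow> 'v \<Rightarrow> 'h set set \<Rightarrow> bool" where
  "transition_at H eps v t \<longleftrightarrow> (\<exists>s1 s2. t = {s1, s2} \<and> card s1 = 2 \<and> card s2 = 2 \<and>
      s1 \<inter> s2 = {} \<and> s1 \<union> s2 = halfedges_at H eps v)"

definition transitions :: "'v set \<Rightarrow> 'h set \<Rightarrow> ('h \<Rightarrow> 'v) \<Rightarrow> 'h set set set" where
  "transitions V H eps = {t. \<exists>v\<in>V. transition_at H eps v t}"

definition transversal :: "'v set \<Rightarrow> 'h set \<Rightarrow> ('h \<Rightarrow> 'v) \<Rightarrow> 'h set set set \<Rightarrow> bool" where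
  "transversal V H eps T \<longleftrightarrow> T \<subseteq> transitions V H eps \<and>
     (\<forall>v\<in>V. \<exists>!t. t \<in> T \<and> transition_at H eps v t)"

definition transitional_orientation ::
  "'v set \<Rightarrow> 'h set \<Rightarrow> ('h \<Rightarrow> 'v) \<Rightarrow> ('h set set \<Rightarrow> 'h set) \<Rightarrow> bool" where
  "transitional_orientation V H eps ori \<longleftrightarrow> (\<forall>t\<in>transitions V H eps. ori t \<in> t)"

definition Delta :: "('h set \<Rightarrow> 'h) \<Rightarrow> ('h set set \<Rightarrow> 'h set) \<Rightarrow> 'h set \<Rightarrow> 'h set set \<Rightarrow> rat" where
  "Delta tail ori e t = (if e \<inter> ori t = {tail e} then 1
                       else if e \<inter> ori t = {head_of tail e} then -1 else 0)"

(* the product CM(F, Gamma_{E,C}, D) * Delta_{D,o}, rows indexed by vertices v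
   (the row of the induced circuit at v) and columns by transitions *)
definition CM_Delta ::
  "'h set \<Rightarrow> 'h set set \<Rightarrow> ('h \<Rightarrow> 'v) \<Rightarrow> 'h set set \<Rightarrow> ('h \<times> 'h) list set \<Rightarrow>
     ('h set \<Rightarrow> 'h) \<Rightarrow> ('h set set \<Rightarrow> 'h set) \<Rightarrow> 'v \<Rightarrow> 'h set set \<Rightarrow> rat" where
  "CM_Delta H E eps Eb C tail ori v t =
     (\<Sum>e\<in>E. of_int (sigma tail (Gamma_EC H E eps Eb C v) e) * Delta tail ori e t)"

definition det_on :: "'a set \<Rightarrow> ('a \<Rightarrow> 'a \<Rightarrow> rat) \<Rightarrow> rat" where
  "det_on A M = (\<Sum>p\<in>{p. p permutes A}. of_int (sign p) * (\<Prod>i\<in>A. M i (p i)))"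

(* the square submatrix formed by the columns in the transversal T; the column of the
   transition of T at w is placed in position w (determinant is up to sign anyway) *)
definition submatrix_T ::
  "'h set \<Rightarrow> ('h \<Rightarrow> 'v) \<Rightarrow> 'h set set set \<Rightarrow> ('v \<Rightarrow> 'h set set \<Rightarrow> rat) \<Rightarrow> 'v \<Rightarrow> 'v \<Rightarrow> rat" where
  "submatrix_T H eps T M v w = M v (THE t. t \<in> T \<and> transition_at H eps w t)"

end

theory Submission
  imports Defs "Jordan_Normal_Form.Determinant"
begin

text \<open>
  Let \<open>n = |V|\<close> and restrict to the \<open>m = 2n - |E|\<close> edges outside the based set \<open>E\<close>; on \<open>E\<close>
  all rows of \<open>CM\<close> vanish. Let \<open>X\<close> be the \<open>n \<times> m\<close> matrix of the circuits \<open>\<Gamma>\<^sub>v\<close> and \<open>Y\<close> the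
  signed incidence matrix of the \<open>k = n - |E|\<close> vertices that are not the tail of an edge of \<open>E\<close>.
  Circuits are orthogonal to vertex cuts, so \<open>X Y = 0\<close>, and \<open>Y\<close> has full column rank: a vertex
  potential that is constant across every edge outside \<open>E\<close> and vanishes at the tails of edges
  of \<open>E\<close> is zero, since the Euler circuit of a component passes through all of its vertices and
  traverses its edge of \<open>E\<close> only once.

  For sets \<open>a(w)\<close> of half-edges at the vertices \<open>w\<close>, let \<open>K\<^sub>a\<close> be the \<open>m \<times> m\<close> matrix whose columns
  are the incidence vectors of all \<open>a(w)\<close> followed by those of the complements of \<open>a(u)\<close> at the
  \<open>k\<close> vertices \<open>u\<close>. These columns come from pairwise disjoint sets of half-edges, so
  \<open>det K\<^sub>a \<in> {-1, 0, 1}\<close>, and \<open>Y\<close> arises from \<open>K\<^sub>a\<close> by column additions. A block computation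
  gives \<open>det [X; Y\<^sup>T] \<cdot> det K\<^sub>a = det (X K\<^sub>a') \<cdot> det (Y\<^sup>T Y)\<close>, where \<open>K\<^sub>a'\<close> consists of the first \<open>n\<close>
  columns. If \<open>a(w)\<close> is the transition of the Euler system at which \<open>\<Gamma>\<^sub>w\<close> leaves \<open>w\<close>, then
  \<open>X K\<^sub>a' = 1\<close>, and comparing the two identities gives \<open>det (X K\<^sub>a') = \<plusminus>det K\<^sub>a\<close> for every \<open>a\<close>.
  The submatrix of the theorem is \<open>X K\<^sub>a'\<close> for \<open>a(w) = \<^bold>o(t\<^sub>w)\<close>, where \<open>t\<^sub>w\<close> is the transition
  of \<open>T\<close> at \<open>w\<close>.
\<close>

section \<open>Determinants indexed by finite sets\<close>

lemma permutes_transfer: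
  assumes bij: "bij_betw f A B" and fin: "finite A" and p: "p permutes A"
  shows "(\<lambda>y. if y \<in> B then f (p (inv_into A f y)) else y) permutes B"
    and "sign (\<lambda>y. if y \<in> B then f (p (inv_into A f y)) else y) = sign p"
proof -
  interpret permutes_bij_finite p A B f "inv_into A f" "\<lambda>y. if y \<in> B then f (p (inv_into A f y)) else y"
    by unfold_locales (use p bij fin in \<open>auto simp: bij_betw_inv_into_left\<close>)
  show "(\<lambda>y. if y \<in> B then f (p (inv_into A f y)) else y) permutes B"
    and "sign (\<lambda>y. if y \<in> B then f (p (inv_into A f y)) else y) = sign p"
    using permutes_p' sign_p' by simp_all
qed

lemma bij_betw_permutes_transfer:
  assumes bij: "bij_betw f A B" and fin: "finite A"
  shows "bij_betw (\<lambda>p y. if y \<in> B then f (p (inv_into A f y)) else y)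
    {p. p permutes A} {q. q permutes B}"
proof (rule bij_betw_byWitness[where f' = "\<lambda>q x. if x \<in> A then inv_into A f (q (f x)) else x"])
  have gf: "\<And>x. x \<in> A \<Longrightarrow> inv_into A f (f x) = x" and fg: "\<And>y. y \<in> B \<Longrightarrow> f (inv_into A f y) = y"
    using bij by (auto simp: bij_betw_inv_into_left bij_betw_inv_into_right)
  have inv_in: "\<And>y. y \<in> B \<Longrightarrow> inv_into A f y \<in> A" and f_in: "\<And>x. x \<in> A \<Longrightarrow> f x \<in> B"
    using bij by (auto simp: bij_betw_def inv_into_into)
  show "\<forall>p\<in>{p. p permutes A}.
      (\<lambda>x. if x \<in> A then inv_into A f ((if f x \<in> B then f (p (inv_into A f (f x))) else f x)) else x) = p"
    by (auto simp: gf f_in permutes_in_image permutes_not_in)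
  show "\<forall>q\<in>{q. q permutes B}.
      (\<lambda>y. if y \<in> B then f (if inv_into A f y \<in> A then inv_into A f (q (f (inv_into A f y)))
        else inv_into A f y) else y) = q"
    by (auto simp: fg inv_in permutes_in_image permutes_not_in)
  show "(\<lambda>p y. if y \<in> B then f (p (inv_into A f y)) else y) ` {p. p permutes A} \<subseteq> {q. q permutes B}"
    using permutes_transfer(1)[OF bij fin] by blast
  have "(\<lambda>x. if x \<in> A then inv_into A f (q (f x)) else x) permutes A" if "q permutes B" for q
  proof -
    interpret permutes_bij q B A "inv_into A f" f "\<lambda>x. if x \<in> A then inv_into A f (q (f x)) else x"
      by unfold_locales (use that bij fg in \<open>auto simp: bij_betw_inv_into\<close>)
    show ?thesis by (rule permutes_p')
  qed
  then show "(\<lambda>q x. if x \<in> A then inv_into A f (q (f x)) else x) ` {q. q permutes B}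
      \<subseteq> {p. p permutes A}" by blast
qed

lemma det_on_reindex:
  fixes M :: "'b \<Rightarrow> 'b \<Rightarrow> rat"
  assumes bij: "bij_betw f A B" and fin: "finite A"
  shows "det_on B M = det_on A (\<lambda>i j. M (f i) (f j))"
proof -
  define transfer where "transfer p = (\<lambda>y. if y \<in> B then f (p (inv_into A f y)) else y)" for p
  have "(\<Prod>y\<in>B. M y (transfer p y)) = (\<Prod>x\<in>A. M (f x) (f (p x)))" if p: "p permutes A" for p
  proof -
    have "(\<Prod>y\<in>B. M y (transfer p y)) = (\<Prod>x\<in>A. M (f x) (transfer p (f x)))"
      using prod.reindex_bij_betw[OF bij, of "\<lambda>y. M y (transfer p y)"] by simp
    also have "\<dots> = (\<Prod>x\<in>A. M (f x) (f (p x)))"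
      using bij by (intro prod.cong) (auto simp: transfer_def bij_betw_inv_into_left
          permutes_in_image[OF p] bij_betw_apply)
    finally show ?thesis .
  qed
  then have "det_on B M = (\<Sum>p\<in>{p. p permutes A}. of_int (sign p) * (\<Prod>x\<in>A. M (f x) (f (p x))))"
    unfolding det_on_def sum.reindex_bij_betw[OF bij_betw_permutes_transfer[OF bij fin], symmetric]
    using permutes_transfer(2)[OF bij fin] unfolding transfer_def by (intro sum.cong) auto
  then show ?thesis unfolding det_on_def .
qed

lemma det_on_eq_det_mat:
  assumes "bij_betw f {0..<n} A"
  shows "det_on A M = det (mat n n (\<lambda>(i, j). M (f i) (f j)))"
proof -
  have "det_on A M = det_on {0..<n} (\<lambda>i j. M (f i) (f j))"
    using assms by (rule det_on_reindex) simp
  also have "\<dots> = det (mat n n (\<lambda>(i, j). M (f i) (f j)))"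
    unfolding det_on_def by (subst det_def'[of _ n]) (auto intro!: sum.cong prod.cong simp: permutes_in_image)
  finally show ?thesis .
qed

lemma det_on_cong:
  assumes "\<And>v w. v \<in> A \<Longrightarrow> w \<in> A \<Longrightarrow> M v w = M' v w"
  shows "det_on A M = det_on A M'"
  unfolding det_on_def
proof (intro sum.cong refl)
  fix p assume "p \<in> {p. p permutes A}"
  then have "(\<Prod>i\<in>A. M i (p i)) = (\<Prod>i\<in>A. M' i (p i))"
    using assms by (intro prod.cong) (auto simp: permutes_in_image)
  then show "of_int (sign p) * (\<Prod>i\<in>A. M i (p i)) = of_int (sign p) * (\<Prod>i\<in>A. M' i (p i))"
    by simp
qed

section \<open>Matrices with signed rows\<close>

lemma det_single_entry_row:
  assumes A: "A \<in> carrier_mat n n" and i: "i < n" and j: "j < n"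
    and others: "\<And>j'. j' < n \<Longrightarrow> j' \<noteq> j \<Longrightarrow> A $$ (i, j') = 0"
  shows "det A = A $$ (i, j) * ((-1) ^ (i + j) * det (mat_delete A i j))"
proof -
  have "det A = (\<Sum>j'<n. A $$ (i, j') * cofactor A i j')"
    by (rule laplace_expansion_row[OF A i])
  also have "\<dots> = (\<Sum>j'<n. if j' = j then A $$ (i, j) * cofactor A i j else 0)"
    using others by (intro sum.cong) auto
  also have "\<dots> = A $$ (i, j) * cofactor A i j"
    using j by simp
  finally show ?thesis unfolding cofactor_def .
qed

lemma det_zero_if_row_sums_zero:
  fixes A :: "'a :: idom mat"
  assumes A: "A \<in> carrier_mat n n" and "0 < n"
    and row_sum: "\<And>i. i < n \<Longrightarrow> (\<Sum>j<n. A $$ (i, j)) = 0"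
  shows "det A = 0"
proof -
  have "A *\<^sub>v vec n (\<lambda>_. 1) = 0\<^sub>v n"
    using A row_sum by (intro eq_vecI) (auto simp: mult_mat_vec_def scalar_prod_def lessThan_atLeast0)
  moreover have "vec n (\<lambda>_. 1) \<noteq> (0\<^sub>v n :: 'a vec)"
    using \<open>0 < n\<close> by (metis index_vec index_zero_vec(1) zero_neq_one)
  ultimately show ?thesis
    using det_0_iff_vec_prod_zero[OF A] by (metis vec_carrier)
qed

lemma sum_eq_0_if_two_signs:
  fixes f :: "nat \<Rightarrow> 'a :: idom"
  assumes vals: "\<And>j. j < n \<Longrightarrow> f j \<in> {-1, 0, 1}"
    and distinct: "\<And>j j'. j < n \<Longrightarrow> j' < n \<Longrightarrow> f j \<noteq> 0 \<Longrightarrow> f j = f j' \<Longrightarrow> j = j'"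
    and j12: "j1 < n" "j2 < n" "j1 \<noteq> j2" "f j1 \<noteq> 0" "f j2 \<noteq> 0"
  shows "(\<Sum>j<n. f j) = 0"
proof -
  have signs: "f j1 \<in> {-1, 1}" "f j2 \<in> {-1, 1}"
    using vals[OF j12(1)] vals[OF j12(2)] j12(4,5) by auto
  have "f j1 \<noteq> f j2" using distinct[OF j12(1,2,4)] j12(3) by blast
  then have opposite: "f j1 + f j2 = 0" using signs by auto
  have zero: "f j = 0" if j: "j < n" "j \<noteq> j1" "j \<noteq> j2" for j
  proof (rule ccontr)
    assume nz: "f j \<noteq> 0"
    then have "f j = f j1 \<or> f j = f j2"
      using vals[OF j(1)] signs \<open>f j1 \<noteq> f j2\<close> by auto
    then show False using distinct[OF j(1) j12(1) nz] distinct[OF j(1) j12(2) nz] j by blast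
  qed
  have "(\<Sum>j<n. f j) = (\<Sum>j\<in>{j1, j2}. f j)"
    using j12 zero by (intro sum.mono_neutral_right) auto
  also have "\<dots> = 0" using j12(3) opposite by simp
  finally show ?thesis .
qed

text \<open>Entries in \<open>{-1, 0, 1}\<close> and at most one \<open>1\<close> and one \<open>-1\<close> per row, as in the transpose
  of the incidence matrix of a digraph.\<close>

definition signed_rows :: "nat \<Rightarrow> 'a :: comm_ring_1 mat \<Rightarrow> bool" where
  "signed_rows n A \<longleftrightarrow> (\<forall>i<n. \<forall>j<n. A $$ (i, j) \<in> {-1, 0, 1}) \<and>
    (\<forall>i<n. \<forall>j<n. \<forall>j'<n. A $$ (i, j) \<noteq> 0 \<longrightarrow> A $$ (i, j) = A $$ (i, j') \<longrightarrow> j = j')"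

lemma signed_rows_mat_delete:
  assumes A: "A \<in> carrier_mat (Suc n) (Suc n)" and "signed_rows (Suc n) A"
    and i: "i < Suc n" and j: "j < Suc n"
  shows "signed_rows n (mat_delete A i j)"
proof -
  have index: "mat_delete A i j $$ (i', j') = A $$ (insert_index i i', insert_index j j')"
    if "i' < n" "j' < n" for i' j'
    using mat_delete_index[OF A i j that] by simp
  have index_lt: "insert_index a b < Suc n" if "b < n" for a b
    using that by (simp add: insert_index_def)
  have index_inj: "insert_index a b = insert_index a b' \<Longrightarrow> b = b'" for a b b'
    by (metis delete_insert_index)
  show ?thesis
    using assms(2) unfolding signed_rows_def
    by (simp add: index index_lt) (metis index_inj index_lt)
qed

lemma det_mem_if_signed_rows:
  fixes A :: "'a :: idom mat"
  assumes "A \<in> carrier_mat n n" and "signed_rows n A"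
  shows "det A \<in> {-1, 0, 1}"
  using assms
proof (induction n arbitrary: A)
  case 0
  then have "A = 1\<^sub>m 0" by (intro eq_matI) auto
  then show ?case by simp
next
  case (Suc n)
  note A = Suc.prems(1)
  have vals: "\<And>i j. i < Suc n \<Longrightarrow> j < Suc n \<Longrightarrow> A $$ (i, j) \<in> {-1, 0, 1}"
    and distinct: "\<And>i j j'. i < Suc n \<Longrightarrow> j < Suc n \<Longrightarrow> j' < Suc n \<Longrightarrow> A $$ (i, j) \<noteq> 0 \<Longrightarrow>
      A $$ (i, j) = A $$ (i, j') \<Longrightarrow> j = j'"
    using Suc.prems(2) unfolding signed_rows_def by blast+
  show ?case
  proof (cases "\<exists>i<Suc n. \<exists>j<Suc n. \<forall>j'<Suc n. j' \<noteq> j \<longrightarrow> A $$ (i, j') = 0")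
    case True
    then obtain i j where i: "i < Suc n" and j: "j < Suc n"
      and others: "\<And>j'. j' < Suc n \<Longrightarrow> j' \<noteq> j \<Longrightarrow> A $$ (i, j') = 0" by blast
    have "det (mat_delete A i j) \<in> {-1, 0, 1}"
      using mat_delete_carrier[OF A] signed_rows_mat_delete[OF A Suc.prems(2) i j] by (intro Suc.IH) auto
    moreover have "A $$ (i, j) \<in> {-1, 0, 1}" using vals i j by blast
    moreover have "(-1 :: 'a) ^ (i + j) \<in> {-1, 1}" by (cases "even (i + j)") auto
    ultimately have "A $$ (i, j) * ((-1) ^ (i + j) * det (mat_delete A i j)) \<in> {-1, 0, 1}" by auto
    with det_single_entry_row[OF A i j others] show ?thesis by simp
  next
    case False
    have "(\<Sum>j<Suc n. A $$ (i, j)) = 0" if i: "i < Suc n" for i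
    proof -
      have no_single: "\<exists>j'<Suc n. j' \<noteq> j \<and> A $$ (i, j') \<noteq> 0" if "j < Suc n" for j
        using False i that by blast
      obtain j1 where j1: "j1 < Suc n" "A $$ (i, j1) \<noteq> 0"
        using no_single[of 0] by blast
      obtain j2 where j2: "j2 < Suc n" "j2 \<noteq> j1" "A $$ (i, j2) \<noteq> 0"
        using no_single[OF j1(1)] by blast
      show ?thesis
        by (rule sum_eq_0_if_two_signs[of "Suc n" "\<lambda>j. A $$ (i, j)" j1 j2])
          (use vals[OF i] distinct[OF i] j1 j2 in auto)
    qed
    then show ?thesis using det_zero_if_row_sums_zero[OF A] by simp
  qed
qed

section \<open>A block determinant identity\<close>

lemma det_gram_nonzero:
  fixes Y :: "nat \<Rightarrow> nat \<Rightarrow> 'a :: linordered_idom"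
  assumes injective: "\<And>x l. \<forall>j<m. (\<Sum>l'<k. Y j l' * x l') = 0 \<Longrightarrow> l < k \<Longrightarrow> x l = 0"
  shows "det (mat k k (\<lambda>(l, l'). \<Sum>j<m. Y j l * Y j l')) \<noteq> 0"
proof
  let ?G = "mat k k (\<lambda>(l, l'). \<Sum>j<m. Y j l * Y j l')"
  assume "det ?G = 0"
  then obtain x where x: "x \<in> carrier_vec k" "x \<noteq> 0\<^sub>v k" "?G *\<^sub>v x = 0\<^sub>v k"
    using det_0_iff_vec_prod_zero[of ?G k] by auto
  define y where "y j = (\<Sum>l<k. Y j l * x $ l)" for j
  have Gx: "(?G *\<^sub>v x) $ l = (\<Sum>j<m. Y j l * y j)" if "l < k" for l
  proof -
    have "(?G *\<^sub>v x) $ l = (\<Sum>l'<k. \<Sum>j<m. Y j l * Y j l' * x $ l')"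
      using that x(1) by (simp add: mult_mat_vec_def scalar_prod_def lessThan_atLeast0 sum_distrib_right)
    also have "\<dots> = (\<Sum>j<m. Y j l * y j)"
      unfolding y_def by (subst sum.swap) (simp add: sum_distrib_left mult.assoc)
    finally show ?thesis .
  qed
  have "0 = (\<Sum>l<k. x $ l * (?G *\<^sub>v x) $ l)" using x(3) by simp
  also have "\<dots> = (\<Sum>l<k. \<Sum>j<m. x $ l * Y j l * y j)"
    using Gx by (simp add: sum_distrib_left mult.assoc)
  also have "\<dots> = (\<Sum>j<m. y j * y j)"
    unfolding y_def
    by (subst sum.swap) (simp add: sum_distrib_left sum_distrib_right mult.commute mult.left_commute)
  finally have "\<forall>j\<in>{..<m}. y j * y j = 0"
    by (subst sum_nonneg_eq_0_iff[symmetric]) auto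
  then have "x $ l = 0" if "l < k" for l
    using injective[of "\<lambda>l. x $ l" l] that unfolding y_def by simp
  then have "x = 0\<^sub>v k" using x(1) by (intro eq_vecI) auto
  with x(2) show False ..
qed

text \<open>Right multiplication by \<open>column_addition_mat n k idx\<close> adds column \<open>idx l\<close> to
  column \<open>n + l\<close>, for every \<open>l < k\<close>.\<close>

definition column_addition_mat :: "nat \<Rightarrow> nat \<Rightarrow> (nat \<Rightarrow> nat) \<Rightarrow> 'a :: comm_ring_1 mat" where
  "column_addition_mat n k idx =
    mat (n + k) (n + k) (\<lambda>(r, c). of_bool (r = c) + of_bool (n \<le> c \<and> r = idx (c - n)))"

lemma det_column_addition_mat:
  assumes "\<And>l. l < k \<Longrightarrow> idx l < n"
  shows "det (column_addition_mat n k idx) = 1"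
proof -
  let ?U = "column_addition_mat n k idx"
  have "upper_triangular ?U"
    unfolding upper_triangular_def
  proof (intro allI impI)
    fix i j assume "i < dim_row ?U" "j < i"
    moreover have "idx (j - n) < j" if "n \<le> j"
    proof -
      have "j - n < k" using that \<open>j < i\<close> \<open>i < dim_row ?U\<close> by (simp add: column_addition_mat_def)
      then show ?thesis using assms[of "j - n"] that by simp
    qed
    ultimately show "?U $$ (i, j) = 0" by (auto simp: column_addition_mat_def)
  qed
  moreover have "?U \<in> carrier_mat (n + k) (n + k)" by (simp add: column_addition_mat_def)
  ultimately have "det ?U = prod_list (diag_mat ?U)" by (rule det_upper_triangular)
  also have "\<dots> = (\<Prod>i = 0..<n + k. ?U $$ (i, i))"
    by (simp add: prod_list_diag_prod column_addition_mat_def)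
  also have "\<dots> = 1"
  proof (intro prod.neutral ballI)
    fix i assume i: "i \<in> {0..<n + k}"
    have "\<not> (n \<le> i \<and> i = idx (i - n))"
    proof
      assume "n \<le> i \<and> i = idx (i - n)"
      moreover from this have "i - n < k" using i by auto
      ultimately show False using assms[of "i - n"] by simp
    qed
    then show "?U $$ (i, i) = 1" using i by (simp add: column_addition_mat_def)
  qed
  finally show ?thesis .
qed

lemma mult_column_addition_mat:
  fixes A :: "'a :: comm_ring_1 mat"
  assumes A: "A \<in> carrier_mat (n + k) (n + k)" and idx: "\<And>l. l < k \<Longrightarrow> idx l < n"
  shows "A * column_addition_mat n k idx
    = mat (n + k) (n + k) (\<lambda>(j, c). A $$ (j, c) + (if n \<le> c then A $$ (j, idx (c - n)) else 0))"
proof (rule eq_matI)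
  fix j c assume "j < dim_row (mat (n + k) (n + k) (\<lambda>(j, c). A $$ (j, c) +
    (if n \<le> c then A $$ (j, idx (c - n)) else 0)))" "c < dim_col (mat (n + k) (n + k) (\<lambda>(j, c).
    A $$ (j, c) + (if n \<le> c then A $$ (j, idx (c - n)) else 0)))"
  then have j: "j < n + k" and c: "c < n + k" by auto
  have "(A * column_addition_mat n k idx) $$ (j, c)
      = (\<Sum>r<n + k. A $$ (j, r) * of_bool (r = c))
        + (\<Sum>r<n + k. A $$ (j, r) * of_bool (n \<le> c \<and> r = idx (c - n)))"
    using A j c
    by (simp add: column_addition_mat_def scalar_prod_def lessThan_atLeast0 distrib_left sum.distrib)
  also have "\<dots> = A $$ (j, c) + (if n \<le> c then A $$ (j, idx (c - n)) else 0)"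
  proof -
    have "idx (c - n) < n" if "n \<le> c" using idx[of "c - n"] c that by simp
    then show ?thesis using c by (auto simp: of_bool_def if_distrib[of "(*) _"] cong: if_cong)
  qed
  finally show "(A * column_addition_mat n k idx) $$ (j, c) = mat (n + k) (n + k)
      (\<lambda>(j, c). A $$ (j, c) + (if n \<le> c then A $$ (j, idx (c - n)) else 0)) $$ (j, c)"
    using j c by simp
qed (use A in \<open>auto simp: column_addition_mat_def\<close>)

text \<open>For \<open>R = [X; Y\<^sup>T]\<close> and \<open>K = [K\<^sub>1 | K\<^sub>2]\<close> with \<open>Y\<close> obtained from \<open>K\<close> by column additions,
  \<open>R K\<close> becomes block lower triangular with diagonal blocks \<open>X K\<^sub>1\<close> and the Gram matrix of \<open>Y\<close>.\<close>

lemma det_stack_mult_det: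
  fixes X Y K :: "nat \<Rightarrow> nat \<Rightarrow> 'a :: idom" and idx :: "nat \<Rightarrow> nat"
  assumes m: "m = n + k"
    and idx: "\<And>l. l < k \<Longrightarrow> idx l < n"
    and YK: "\<And>j l. j < m \<Longrightarrow> l < k \<Longrightarrow> Y j l = K j (idx l) + K j (n + l)"
    and XY: "\<And>r l. r < n \<Longrightarrow> l < k \<Longrightarrow> (\<Sum>j<m. X r j * Y j l) = 0"
  shows "det (mat m m (\<lambda>(r, j). if r < n then X r j else Y j (r - n))) * det (mat m m (\<lambda>(j, c). K j c))
    = det (mat n n (\<lambda>(r, c). \<Sum>j<m. X r j * K j c)) * det (mat k k (\<lambda>(l, l'). \<Sum>j<m. Y j l * Y j l'))"
proof -
  define R where "R = mat m m (\<lambda>(r, j). if r < n then X r j else Y j (r - n))"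
  define KK where "KK = mat m m (\<lambda>(j, c). K j c)"
  define U :: "'a mat" where "U = column_addition_mat n k idx"
  define XK where "XK = mat n n (\<lambda>(r, c). \<Sum>j<m. X r j * K j c)"
  define YK' where "YK' = mat k n (\<lambda>(l, c). \<Sum>j<m. Y j l * K j c)"
  define G where "G = mat k k (\<lambda>(l, l'). \<Sum>j<m. Y j l * Y j l')"
  have carrier: "R \<in> carrier_mat m m" "KK \<in> carrier_mat m m" "U \<in> carrier_mat m m"
    unfolding R_def KK_def U_def column_addition_mat_def m by auto
  have "KK * U = mat m m (\<lambda>(j, c). if c < n then K j c else Y j (c - n))"
  proof -
    have "idx (c - n) < n + k" if "\<not> c < n" "c < m" for c
    proof -
      have "c - n < k" using that m by linarith
      then show ?thesis using idx[of "c - n"] by simp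
    qed
    then show ?thesis
      using mult_column_addition_mat[of KK n k idx] carrier idx YK
      unfolding U_def KK_def m by (auto intro!: eq_matI)
  qed
  then have "R * (KK * U) = four_block_mat XK (0\<^sub>m n k) YK' G"
    using m XY unfolding R_def XK_def YK'_def G_def
    by (auto intro!: eq_matI simp: scalar_prod_def lessThan_atLeast0 intro!: sum.cong)
  moreover have "det U = 1" unfolding U_def using idx by (rule det_column_addition_mat)
  ultimately have "det R * det KK = det (four_block_mat XK (0\<^sub>m n k) YK' G)"
    using det_mult[OF carrier(2,3)] det_mult[OF carrier(1) mult_carrier_mat[OF carrier(2,3)]] by simp
  also have "\<dots> = det XK * det G"
    by (rule det_four_block_mat_upper_right_zero) (auto simp: XK_def G_def YK'_def)
  finally show ?thesis unfolding R_def KK_def XK_def G_def .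
qed

text \<open>By the previous lemma the ratio of \<open>det (X K\<^sub>1)\<close> to \<open>det K\<close> is the same for every \<open>K\<close>
  from which \<open>Y\<close> arises by column additions; a reference \<open>K'\<close> with \<open>X K'\<^sub>1 = 1\<close> and
  \<open>det K' \<in> {-1, 0, 1}\<close> forces this ratio to be \<open>\<plusminus>1\<close>.\<close>

lemma det_mult_mem_if_reference_splitting:
  fixes X Y K K' :: "nat \<Rightarrow> nat \<Rightarrow> 'a :: idom"
  assumes m: "m = n + k"
    and idx: "\<And>l. l < k \<Longrightarrow> idx l < n"
    and XY: "\<And>r l. r < n \<Longrightarrow> l < k \<Longrightarrow> (\<Sum>j<m. X r j * Y j l) = 0"
    and gram: "det (mat k k (\<lambda>(l, l'). \<Sum>j<m. Y j l * Y j l')) \<noteq> 0"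
    and split: "\<And>j l. j < m \<Longrightarrow> l < k \<Longrightarrow> Y j l = K j (idx l) + K j (n + l)"
    and split': "\<And>j l. j < m \<Longrightarrow> l < k \<Longrightarrow> Y j l = K' j (idx l) + K' j (n + l)"
    and inverse: "mat n n (\<lambda>(r, c). \<Sum>j<m. X r j * K' j c) = 1\<^sub>m n"
    and unimodular: "det (mat m m (\<lambda>(j, c). K j c)) \<in> {-1, 0, 1}"
    and unimodular': "det (mat m m (\<lambda>(j, c). K' j c)) \<in> {-1, 0, 1}"
  shows "det (mat n n (\<lambda>(r, c). \<Sum>j<m. X r j * K j c)) \<in> {-1, 0, 1}"
proof -
  define P where "P = det (mat n n (\<lambda>(r, c). \<Sum>j<m. X r j * K j c))"
  define R where "R = det (mat m m (\<lambda>(r, j). if r < n then X r j else Y j (r - n)))"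
  define G where "G = det (mat k k (\<lambda>(l, l'). \<Sum>j<m. Y j l * Y j l'))"
  define D where "D = det (mat m m (\<lambda>(j, c). K j c))"
  define D' where "D' = det (mat m m (\<lambda>(j, c). K' j c))"
  have RD: "R * D = P * G"
    unfolding P_def R_def D_def G_def using m idx split XY by (rule det_stack_mult_det)
  have RD': "R * D' = G"
    using det_stack_mult_det[where K = K', OF m idx split' XY] inverse
    unfolding R_def D'_def G_def by simp
  have "G \<noteq> 0" using gram unfolding G_def .
  have "D \<in> {-1, 0, 1}" "D' \<in> {-1, 0, 1}"
    using unimodular unimodular' unfolding D_def D'_def by auto
  moreover have "D' \<noteq> 0" using RD' \<open>G \<noteq> 0\<close> by auto
  ultimately have D': "D' * D' = 1" by auto
  have "P * G = R * D * (D' * D')" using RD D' by simp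
  also have "\<dots> = (R * D') * (D * D')" by (simp add: ac_simps)
  finally have "P * G = G * (D * D')" using RD' by simp
  then have "P = D * D'" using \<open>G \<noteq> 0\<close> by (simp add: mult.commute)
  then show ?thesis unfolding P_def[symmetric] using \<open>D \<in> {-1, 0, 1}\<close> \<open>D' \<in> {-1, 0, 1}\<close> by auto
qed

section \<open>Incidence vectors and walks\<close>

definition incidence :: "('h set \<Rightarrow> 'h) \<Rightarrow> 'h set \<Rightarrow> 'h set \<Rightarrow> rat" where
  "incidence tail s e = of_bool (tail e \<in> s) - of_bool (head_of tail e \<in> s)"

lemma incidence_mem: "incidence tail s e \<in> {-1, 0, 1}"
  unfolding incidence_def by auto

lemma incidence_eq_1D: "incidence tail s e = 1 \<Longrightarrow> tail e \<in> s"
  unfolding incidence_def by (cases "tail e \<in> s"; cases "head_of tail e \<in> s") auto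

lemma incidence_eq_minus_1D: "incidence tail s e = -1 \<Longrightarrow> head_of tail e \<in> s"
  unfolding incidence_def by (cases "tail e \<in> s"; cases "head_of tail e \<in> s") auto

lemma incidence_Diff:
  "A \<subseteq> S \<Longrightarrow> incidence tail S e = incidence tail A e + incidence tail (S - A) e"
  unfolding incidence_def by auto

lemma det_incidence_columns_mem:
  assumes disjoint: "\<And>c c'. c < m \<Longrightarrow> c' < m \<Longrightarrow> c \<noteq> c' \<Longrightarrow> S c \<inter> S c' = {}"
  shows "det (mat m m (\<lambda>(j, c). incidence tail (S c) (es ! j))) \<in> {-1, 0, 1}"
proof (rule det_mem_if_signed_rows)
  have "j = j'" if ij: "i < m" "j < m" "j' < m" and nz: "incidence tail (S j) (es ! i) \<noteq> 0"
    and eq: "incidence tail (S j) (es ! i) = incidence tail (S j') (es ! i)" for i j j'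
  proof -
    have "incidence tail (S j) (es ! i) \<in> {-1, 1}" using nz incidence_mem by auto
    then have "tail (es ! i) \<in> S j \<inter> S j' \<or> head_of tail (es ! i) \<in> S j \<inter> S j'"
      using eq by (auto dest: incidence_eq_1D incidence_eq_minus_1D)
    then show "j = j'" using disjoint[OF ij(2,3)] by blast
  qed
  moreover have "incidence tail (S j) (es ! i) \<in> {-1, 0, 1}" for i j by (rule incidence_mem)
  ultimately show "signed_rows m (mat m m (\<lambda>(j, c). incidence tail (S c) (es ! j)))"
    unfolding signed_rows_def by simp
qed simp

lemma set_walk_halfedges: "set (walk_halfedges W) = fst ` set W \<union> snd ` set W"
  unfolding walk_halfedges_def by (induction W) auto

lemma length_walk_halfedges: "length (walk_halfedges W) = 2 * length W"
  unfolding walk_halfedges_def by (induction W) auto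

lemma walk_halfedges_Cons: "walk_halfedges (p # W) = fst p # snd p # walk_halfedges W"
  unfolding walk_halfedges_def by simp

lemma distinct_walk_halfedgesD:
  assumes "distinct (walk_halfedges W)" "p \<in> set W" "q \<in> set W"
  shows "(fst p = fst q \<longrightarrow> p = q) \<and> (snd p = snd q \<longrightarrow> p = q) \<and> fst p \<noteq> snd q"
  using assms
proof (induction W)
  case (Cons a W)
  have "fst a \<notin> set (walk_halfedges W)" "snd a \<notin> set (walk_halfedges W)" "fst a \<noteq> snd a"
    "distinct (walk_halfedges W)"
    using Cons.prems(1) by (auto simp: walk_halfedges_Cons)
  then show ?case
    using Cons.IH Cons.prems(2,3) unfolding set_walk_halfedges by (auto simp: image_iff)
qed simp

lemma distinct_walk_halfedges_imp_distinct:
  assumes "distinct (walk_halfedges W)"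
  shows "distinct W"
  using assms by (induction W) (auto simp: walk_halfedges_Cons set_walk_halfedges)

lemma walk_edge_rotate:
  assumes "i < length W"
  shows "walk_edge (rotate k W) i = walk_edge W ((i + k) mod length W)"
proof -
  have L: "0 < length W" using assms by linarith
  have "(Suc i mod length W + k) mod length W = Suc ((i + k) mod length W) mod length W"
    by (metis add_Suc mod_add_left_eq mod_Suc_eq)
  then show ?thesis
    unfolding walk_edge_def using assms L
    by (simp add: nth_rotate add.commute)
qed

lemma walk_edge_shortcut:
  assumes "Z = (fst p2, snd p1) # X" "i < length Z"
  shows "walk_edge Z i = {snd ((p1 # X) ! i), fst ((X @ [p2]) ! i)}"
proof -
  have s: "snd (Z ! i) = snd ((p1 # X) ! i)" using assms by (cases i) auto
  have f: "fst (Z ! (Suc i mod length Z)) = fst ((X @ [p2]) ! i)"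
  proof (cases "Suc i < length Z")
    case True
    then have "i < length X" using assms by simp
    then show ?thesis using True assms by (simp add: nth_append)
  next
    case False
    then have "Suc i = length Z" using assms by simp
    then have "i = length X" "Suc i mod length Z = 0" using assms by auto
    then show ?thesis using assms by simp
  qed
  show ?thesis unfolding walk_edge_def using s f by simp
qed

lemma walk_edge_shortcut_eq:
  assumes "Z = (fst p2, snd p1) # X" "i < length Z" "R = p1 # X @ p2 # Y"
  shows "walk_edge Z i = walk_edge R i"
proof -
  have "R ! i = (p1 # X) ! i" using assms by (auto simp: nth_append nth_Cons split: nat.splits)
  moreover have "(Suc i) mod length R = Suc i" using assms by simp
  moreover have "R ! (Suc i) = (X @ [p2]) ! i" using assms
    by (auto simp: nth_append nth_Cons split: nat.splits)
  ultimately show ?thesis using walk_edge_shortcut[OF assms(1,2)] unfolding walk_edge_def by simp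
qed

lemma sum_Suc_mod:
  fixes g :: "nat \<Rightarrow> 'a :: comm_monoid_add"
  assumes "0 < L"
  shows "(\<Sum>i<L. g (Suc i mod L)) = (\<Sum>i<L. g i)"
proof -
  obtain L' where L: "L = Suc L'" using assms by (cases L) auto
  have "(\<Sum>i<L. g (Suc i mod L)) = (\<Sum>i<L'. g (Suc i mod L)) + g (Suc L' mod L)"
    unfolding L by simp
  also have "(\<Sum>i<L'. g (Suc i mod L)) = (\<Sum>i<L'. g (Suc i))"
    by (intro sum.cong) (auto simp: L)
  also have "g (Suc L' mod L) = g 0" unfolding L by simp
  also have "(\<Sum>i<L'. g (Suc i)) + g 0 = (\<Sum>i<L. g i)"
    unfolding L sum.lessThan_Suc_shift by (simp add: add.commute)
  finally show ?thesis .
qed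

lemma cyclic_steps_constant:
  assumes i0: "i0 < L" and step: "\<And>i. i < L \<Longrightarrow> i \<noteq> i0 \<Longrightarrow> f i = f (Suc i mod L)"
    and i: "i < L"
  shows "f i = f (Suc i0 mod L)"
proof -
  have from_i0: "f ((Suc i0 + d) mod L) = f (Suc i0 mod L)" if "d < L" for d
    using that
  proof (induction d)
    case (Suc d)
    define j where "j = (Suc i0 + d) mod L"
    have "j \<noteq> i0"
    proof
      assume "j = i0"
      then have "(i0 + Suc d) mod L = i0 mod L" using i0 unfolding j_def by simp
      then have "L dvd Suc d" using mod_eq_dvd_iff_nat[of i0 "i0 + Suc d" L] by simp
      then show False using Suc.prems by (simp add: dvd_imp_le leD)
    qed
    moreover have "j < L" using i0 unfolding j_def by simp
    ultimately have "f j = f (Suc j mod L)" using step by blast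
    moreover have "Suc j mod L = (Suc i0 + Suc d) mod L" unfolding j_def by (simp add: mod_Suc_eq)
    ultimately show ?case using Suc unfolding j_def by simp
  qed simp
  define d where "d = (L + i - Suc i0) mod L"
  have "(Suc i0 + d) mod L = (Suc i0 + (L + i - Suc i0)) mod L"
    unfolding d_def by (metis mod_add_right_eq)
  also have "\<dots> = i" using i0 i by simp
  finally show ?thesis using from_i0[of d] i0 unfolding d_def by simp
qed

lemma sum_list_0_if_all_0: "(\<And>x. x \<in> set xs \<Longrightarrow> f x = 0) \<Longrightarrow> (\<Sum>x\<leftarrow>xs. f x) = 0"
  by (induction xs) auto

section \<open>Euler systems of directed 4-regular graphs\<close>

locale directed_graph =
  fixes V :: "'v set" and H :: "'h set" and E :: "'h set set" and eps :: "'h \<Rightarrow> 'v"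
    and tail :: "'h set \<Rightarrow> 'h"
  assumes graph: "is_graph V H E eps" and directed: "directed_version E tail"
begin

abbreviation head :: "'h set \<Rightarrow> 'h" where "head \<equiv> head_of tail"
abbreviation halfedges :: "'v \<Rightarrow> 'h set" where "halfedges \<equiv> halfedges_at H eps"
abbreviation connected :: "'v \<Rightarrow> 'v \<Rightarrow> bool" where "connected \<equiv> same_comp E eps"
abbreviation component :: "'v \<Rightarrow> 'h set" where "component \<equiv> comp_halfedges H E eps"

lemma finite_V: "finite V" and finite_H: "finite H"
  using graph unfolding is_graph_def by auto

lemma edge_subset: "e \<in> E \<Longrightarrow> e \<subseteq> H" and card_edge: "e \<in> E \<Longrightarrow> card e = 2"
  using graph unfolding is_graph_def by auto

lemma ex1_edge: "h \<in> H \<Longrightarrow> \<exists>!e. e \<in> E \<and> h \<in> e"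
  using graph unfolding is_graph_def by auto

lemma eps_in_V: "h \<in> H \<Longrightarrow> eps h \<in> V"
  using graph unfolding is_graph_def by auto

lemma finite_E: "finite E"
  using finite_subset[of E "Pow H"] edge_subset finite_H by auto

lemma edge_eq_tail_head:
  assumes "e \<in> E"
  shows "e = {tail e, head e}" and "tail e \<noteq> head e"
proof -
  obtain a b where ab: "a \<noteq> b" "e = {a, b}" using card_edge[OF assms] unfolding card_2_iff by blast
  have t: "tail e \<in> e" using directed assms unfolding directed_version_def by auto
  define other where "other = (if tail e = a then b else a)"
  have "head e = other" unfolding head_of_def
    by (rule the_equality) (use ab t in \<open>auto simp: other_def\<close>)
  then show "e = {tail e, head e}" and "tail e \<noteq> head e"
    using ab t unfolding other_def by auto
qed

lemma tail_in_H: "e \<in> E \<Longrightarrow> tail e \<in> H" and head_in_H: "e \<in> E \<Longrightarrow> head e \<in> H"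
  using edge_eq_tail_head(1) edge_subset by blast+

lemma halfedges_disjoint: "w \<noteq> w' \<Longrightarrow> halfedges w \<inter> halfedges w' = {}"
  unfolding halfedges_at_def by auto

lemma connected_refl: "connected x x"
  unfolding same_comp_def by simp

lemma connected_sym: "connected x y \<Longrightarrow> connected y x"
proof -
  have "sym (adj_rel E eps)" unfolding adj_rel_def sym_def by blast
  then show "connected x y \<Longrightarrow> connected y x"
    unfolding same_comp_def using sym_rtrancl symD by metis
qed

lemma connected_trans: "connected x y \<Longrightarrow> connected y z \<Longrightarrow> connected x z"
  unfolding same_comp_def by simp

lemma connected_edge: "e \<in> E \<Longrightarrow> h \<in> e \<Longrightarrow> h' \<in> e \<Longrightarrow> connected (eps h) (eps h')"
  unfolding same_comp_def adj_rel_def by blast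

lemma component_eq: "connected x y \<Longrightarrow> component x = component y"
  unfolding comp_halfedges_def using connected_sym connected_trans by blast

lemma halfedges_subset_component: "halfedges v \<subseteq> component v"
  unfolding comp_halfedges_def halfedges_at_def using connected_refl by auto

lemma card_E_if_four_regular:
  assumes "four_regular V H eps"
  shows "card E = 2 * card V"
proof -
  have "H = (\<Union>w\<in>V. halfedges w)" using eps_in_V unfolding halfedges_at_def by auto
  also have "card \<dots> = (\<Sum>w\<in>V. card (halfedges w))"
    by (rule card_UN_disjoint) (use finite_V finite_H in \<open>auto simp: halfedges_at_def\<close>)
  also have "\<dots> = 4 * card V"
    using assms unfolding four_regular_def by simp
  finally have "card H = 4 * card V" .
  moreover have "card H = 2 * card E"
  proof -
    have "H = \<Union>E" using ex1_edge edge_subset by blast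
    moreover have "pairwise disjnt E"
      using ex1_edge edge_subset unfolding pairwise_def disjnt_def by blast
    moreover have "finite e" if "e \<in> E" for e
      using edge_subset[OF that] finite_H by (rule finite_subset)
    ultimately have "card H = (\<Sum>e\<in>E. card e)" by (simp add: card_Union_disjoint)
    then show ?thesis using card_edge by simp
  qed
  ultimately show ?thesis by simp
qed

lemma sigma_incidence_sum:
  assumes ne: "W \<noteq> []" and we: "\<forall>i<length W. walk_edge W i \<in> E"
  shows "(\<Sum>e\<in>E. of_int (sigma tail W e) * incidence tail s e)
    = (\<Sum>i<length W. of_bool (snd (W ! i) \<in> s) - of_bool (fst (W ! i) \<in> s))"
proof -
  define f :: "'h \<Rightarrow> rat" where "f h = of_bool (h \<in> s)" for h
  let ?L = "length W"
  let ?s = "\<lambda>i e. (if snd (W ! i) = tail e then 1 else -1) :: rat"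
  have edge: "?s i (walk_edge W i) * incidence tail s (walk_edge W i)
      = f (snd (W ! i)) - f (fst (W ! (Suc i mod ?L)))" if "i < ?L" for i
  proof -
    define x y where "x = snd (W ! i)" and "y = fst (W ! (Suc i mod ?L))"
    have e: "walk_edge W i = {x, y}" unfolding x_def y_def walk_edge_def by simp
    then have "{x, y} \<in> E" using we that by metis
    then have "(x = tail {x, y} \<and> y = head {x, y}) \<or> (x = head {x, y} \<and> y = tail {x, y})"
      and "tail {x, y} \<noteq> head {x, y}"
      using edge_eq_tail_head[of "{x, y}"] by (auto simp: doubleton_eq_iff)
    then show ?thesis
      unfolding e f_def incidence_def x_def[symmetric] y_def[symmetric] by auto
  qed
  have "(\<Sum>e\<in>E. of_int (sigma tail W e) * incidence tail s e)
      = (\<Sum>e\<in>E. \<Sum>i<?L. (if walk_edge W i = e then ?s i e * incidence tail s e else 0))"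
    unfolding sigma_def of_int_sum sum_distrib_right by (intro sum.cong refl) auto
  also have "\<dots> = (\<Sum>i<?L. \<Sum>e\<in>E. (if walk_edge W i = e then ?s i e * incidence tail s e else 0))"
    by (rule sum.swap)
  also have "\<dots> = (\<Sum>i<?L. ?s i (walk_edge W i) * incidence tail s (walk_edge W i))"
    using we finite_E by (intro sum.cong refl) (simp add: sum.delta)
  also have "\<dots> = (\<Sum>i<?L. f (snd (W!i)) - f (fst (W ! (Suc i mod ?L))))"
    using edge by (intro sum.cong) auto
  also have "\<dots> = (\<Sum>i<?L. f (snd (W!i))) - (\<Sum>i<?L. f (fst (W ! (Suc i mod ?L))))"
    by (simp add: sum_subtractf)
  also have "(\<Sum>i<?L. f (fst (W ! (Suc i mod ?L)))) = (\<Sum>i<?L. f (fst (W ! i)))"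
    using sum_Suc_mod[of ?L "\<lambda>i. f (fst (W ! i))"] ne by simp
  finally show ?thesis by (simp add: sum_subtractf f_def)
qed

lemma Delta_eq_incidence:
  assumes "e \<in> E"
  shows "Delta tail ori e t = incidence tail (ori t) e"
proof -
  have "(if {a, b} \<inter> s = {a} then 1 else if {a, b} \<inter> s = {b} then -1 else 0)
      = of_bool (a \<in> s) - (of_bool (b \<in> s) :: rat)" if "a \<noteq> b" for a b :: 'h and s
    using that by (cases "a \<in> s"; cases "b \<in> s") (auto simp: doubleton_eq_iff)
  from this[OF edge_eq_tail_head(2)[OF assms]] show ?thesis
    unfolding Delta_def incidence_def edge_eq_tail_head(1)[OF assms, symmetric] .
qed

end

locale euler_system = directed_graph V H E eps tail
  for V :: "'v set" and H :: "'h set" and E and eps :: "'h \<Rightarrow> 'v" and tail +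
  fixes C :: "('h \<times> 'h) list set"
  assumes four_regular: "four_regular V H eps" and euler: "oriented_euler_system V H E eps C"
begin

lemma card_halfedges: "w \<in> V \<Longrightarrow> card (halfedges w) = 4"
  using four_regular unfolding four_regular_def by auto

lemma circuit_in_system:
  "W \<in> C \<Longrightarrow> oriented_circuit H E eps W \<and> (\<exists>v\<in>V. set (walk_halfedges W) = component v)"
  using euler unfolding oriented_euler_system_def by auto

lemma ex1_circuit: "v \<in> V \<Longrightarrow> \<exists>!W. W \<in> C \<and> set (walk_halfedges W) = component v"
  using euler unfolding oriented_euler_system_def by blast

lemma circuit_eqI:
  assumes "W1 \<in> C" "W2 \<in> C" "h \<in> set (walk_halfedges W1)" "h \<in> set (walk_halfedges W2)"
  shows "W1 = W2"
proof -
  obtain x1 where x1: "x1 \<in> V" "set (walk_halfedges W1) = component x1"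
    using circuit_in_system assms(1) by blast
  obtain x2 where x2: "x2 \<in> V" "set (walk_halfedges W2) = component x2"
    using circuit_in_system assms(2) by blast
  have "connected x1 x2"
    using x1 x2 assms(3,4) connected_sym connected_trans unfolding comp_halfedges_def by blast
  then have "component x1 = component x2" by (rule component_eq)
  then show ?thesis using ex1_circuit[OF x1(1)] assms(1,2) x1 x2 by metis
qed

lemma distinct_circuit_halfedges: "W \<in> C \<Longrightarrow> distinct (walk_halfedges W)"
  using circuit_in_system unfolding oriented_circuit_def by auto

lemma distinct_circuit: "W \<in> C \<Longrightarrow> distinct W"
  using distinct_circuit_halfedges distinct_walk_halfedges_imp_distinct by blast

lemma closed_walk_circuit: "W \<in> C \<Longrightarrow> closed_walk H E eps W"
  using circuit_in_system unfolding oriented_circuit_def by auto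

lemma transition_in_system:
  assumes "W \<in> C" "p \<in> set W"
  shows "fst p \<in> H \<and> snd p \<in> H \<and> eps (fst p) = eps (snd p) \<and> fst p \<noteq> snd p"
  using closed_walk_circuit[OF assms(1)] assms(2)
  unfolding closed_walk_def dir_single_transition_def by blast

lemma transitions_disjoint:
  assumes "W1 \<in> C" "W2 \<in> C" "p \<in> set W1" "q \<in> set W2"
  shows "(fst p = fst q \<longrightarrow> p = q) \<and> (snd p = snd q \<longrightarrow> p = q) \<and> fst p \<noteq> snd q"
proof -
  have "W1 = W2" if "h \<in> {fst p, snd p}" "h \<in> {fst q, snd q}" for h
    using circuit_eqI[OF assms(1,2), of h] assms(3,4) that unfolding set_walk_halfedges by auto
  then show ?thesis
    using distinct_walk_halfedgesD[OF distinct_circuit_halfedges[OF assms(1)] assms(3)] assms(4)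
    by (metis insert_iff)
qed

lemma walk_edge_in_E: "W \<in> C \<Longrightarrow> i < length W \<Longrightarrow> walk_edge W i \<in> E"
  using closed_walk_circuit unfolding closed_walk_def by blast

lemma inj_walk_edge:
  assumes W: "W \<in> C" and ij: "i < length W" "j < length W" "walk_edge W i = walk_edge W j"
  shows "i = j"
proof -
  have "0 < length W" using ij(1) by linarith
  then have mem: "W ! i \<in> set W" "W ! j \<in> set W" "W ! (Suc j mod length W) \<in> set W"
    using ij by auto
  have "snd (W ! i) \<in> {snd (W ! j), fst (W ! (Suc j mod length W))}"
    using ij(3) unfolding walk_edge_def by auto
  moreover have "snd (W ! i) \<noteq> fst (W ! (Suc j mod length W))"
    using transitions_disjoint[OF W W mem(3) mem(1)] by auto
  ultimately have "W ! i = W ! j" using transitions_disjoint[OF W W mem(1) mem(2)] by auto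
  then show ?thesis using distinct_circuit[OF W] ij nth_eq_iff_index_eq by blast
qed

lemma vertex_on_circuit:
  assumes "W \<in> C" "h \<in> set (walk_halfedges W)"
  shows "\<exists>j<length W. eps (fst (W ! j)) = eps h"
proof -
  obtain p where p: "p \<in> set W" "h = fst p \<or> h = snd p"
    using assms(2) unfolding set_walk_halfedges by auto
  then obtain j where "j < length W" "W ! j = p" by (metis in_set_conv_nth)
  then show ?thesis using transition_in_system[OF assms(1) p(1)] p(2) by auto
qed

lemma two_visits:
  assumes v: "v \<in> V" and W: "W \<in> C" "set (walk_halfedges W) = component v"
  shows "length (filter (\<lambda>p. eps (fst p) = v) W) = 2"
proof -
  let ?P = "\<lambda>p. eps (fst p) = v"
  let ?Q = "\<lambda>h. eps h = v"
  have "\<forall>p\<in>set W. eps (fst p) = eps (snd p)" using transition_in_system[OF W(1)] by blast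
  then have filter: "walk_halfedges (filter ?P W) = filter ?Q (walk_halfedges W)"
    by (induction W) (auto simp: walk_halfedges_Cons walk_halfedges_def)
  have "set (filter ?Q (walk_halfedges W)) = halfedges v"
    using W(2) halfedges_subset_component[of v] unfolding comp_halfedges_def halfedges_at_def by auto
  then have "card (halfedges v) = length (filter ?Q (walk_halfedges W))"
    using distinct_card distinct_filter distinct_circuit_halfedges[OF W(1)] by metis
  also have "\<dots> = 2 * length (filter ?P W)"
    unfolding filter[symmetric] length_walk_halfedges ..
  finally show ?thesis using card_halfedges[OF v] by simp
qed

end

section \<open>The induced circuits\<close>

locale based_euler_system = euler_system V H E eps tail C
  for V :: "'v set" and H :: "'h set" and E and eps :: "'h \<Rightarrow> 'v" and tail and C +
  fixes Eb :: "'h set set"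
  assumes based: "based V E eps Eb"
begin

abbreviation Gamma :: "'v \<Rightarrow> ('h \<times> 'h) list" where "Gamma \<equiv> Gamma_EC H E eps Eb C"

lemma base_subset: "Eb \<subseteq> E"
  using based unfolding based_def by auto

lemma finite_Eb: "finite Eb"
  using finite_subset[OF base_subset finite_E] .

lemma ex_base_edge: "v \<in> V \<Longrightarrow> \<exists>b\<in>Eb. \<forall>h\<in>b. connected v (eps h)"
  using based unfolding based_def by blast

lemma base_edge_unique:
  "v \<in> V \<Longrightarrow> b1 \<in> Eb \<Longrightarrow> b2 \<in> Eb \<Longrightarrow> \<forall>h\<in>b1. connected v (eps h) \<Longrightarrow>
    \<forall>h\<in>b2. connected v (eps h) \<Longrightarrow> b1 = b2"
  using based unfolding based_def by blast

lemma walk_edge_connected: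
  assumes W: "W \<in> C" "set (walk_halfedges W) = component v" and i: "i < length W"
  shows "\<forall>h\<in>walk_edge W i. connected v (eps h)"
proof -
  have "0 < length W" using i by linarith
  then have "W ! i \<in> set W" "W ! (Suc i mod length W) \<in> set W" using i by auto
  then have "walk_edge W i \<subseteq> set (walk_halfedges W)"
    unfolding walk_edge_def set_walk_halfedges by auto
  then show ?thesis using W(2) unfolding comp_halfedges_def by auto
qed

lemma shortcut_avoids_base:
  assumes v: "v \<in> V" and W: "W \<in> C" "set (walk_halfedges W) = component v"
    and R: "set R = set W" "distinct R" "R = p1 # X @ p2 # Y"
  shows "(\<forall>b\<in>Eb. b \<notin> walk_edges ((fst p2, snd p1) # X))
    \<or> (\<forall>b\<in>Eb. b \<notin> walk_edges ((fst p1, snd p2) # Y))"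
proof (rule ccontr)
  define Z1 Z2 where "Z1 = (fst p2, snd p1) # X" and "Z2 = (fst p1, snd p2) # Y"
  assume "\<not> ?thesis"
  then obtain b1 b2 i1 i2 where b: "b1 \<in> Eb" "b2 \<in> Eb"
    and i: "i1 < length Z1" "b1 = walk_edge Z1 i1" "i2 < length Z2" "b2 = walk_edge Z2 i2"
    unfolding walk_edges_def Z1_def Z2_def by blast
  define a1 c1 a2 c2
    where "a1 = (p1 # X) ! i1" and "c1 = (X @ [p2]) ! i1"
      and "a2 = (p2 # Y) ! i2" and "c2 = (Y @ [p1]) ! i2"
  have a1: "a1 \<in> set (p1 # X)" and "c1 \<in> set (X @ [p2])"
    unfolding a1_def c1_def by (rule nth_mem, use i(1) in \<open>simp add: Z1_def\<close>)+
  have a2: "a2 \<in> set (p2 # Y)" and "c2 \<in> set (Y @ [p1])"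
    unfolding a2_def c2_def by (rule nth_mem, use i(3) in \<open>simp add: Z2_def\<close>)+
  from \<open>c1 \<in> _\<close> \<open>c2 \<in> _\<close> a1 a2 R have in_W: "a1 \<in> set W" "c1 \<in> set W" "a2 \<in> set W" "c2 \<in> set W"
    by auto
  have b1: "b1 = {snd a1, fst c1}" and b2: "b2 = {snd a2, fst c2}"
    using walk_edge_shortcut[OF Z1_def i(1)] walk_edge_shortcut[OF Z2_def i(3)] i
    unfolding a1_def c1_def a2_def c2_def by simp_all
  have "\<forall>h\<in>b. connected v (eps h)" if "b = {snd a, fst c}" "a \<in> set W" "c \<in> set W" for a b c
    using that W(2) unfolding set_walk_halfedges comp_halfedges_def by auto
  then have "b1 = b2"
    using base_edge_unique[OF v b] b1 b2 in_W by blast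
  then have "snd a1 = snd a2"
    using b1 b2 transitions_disjoint[OF W(1) W(1) in_W(4) in_W(1)] by auto
  then have "a1 = a2" using transitions_disjoint[OF W(1) W(1) in_W(1) in_W(3)] by auto
  then show False using a1 a2 R by auto
qed

lemma induced_circuitI:
  assumes "W \<in> C" "set (walk_halfedges W) = component v" "rotate k W = p1 # X @ p2 # Y"
    and "eps (fst p1) = v" "eps (fst p2) = v" "\<forall>p\<in>set X \<union> set Y. eps (fst p) \<noteq> v"
    and "\<forall>e\<in>Eb. e \<notin> walk_edges ((fst p2, snd p1) # X)"
  shows "induced_circuit H E eps Eb C v ((fst p2, snd p1) # X)"
  unfolding induced_circuit_def using assms by blast

lemma ex_induced_circuit:
  assumes v: "v \<in> V"
  shows "\<exists>Z. induced_circuit H E eps Eb C v Z"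
proof -
  obtain W where W: "W \<in> C" "set (walk_halfedges W) = component v"
    using ex1_circuit[OF v] by blast
  let ?P = "\<lambda>p. eps (fst p) = v"
  obtain p1 p2 where "filter ?P W = [p1, p2]"
    using two_visits[OF v W] by (auto simp: numeral_2_eq_2 length_Suc_conv)
  then obtain A W' where "W = A @ p1 # W'" "\<forall>p\<in>set A. \<not> ?P p" "?P p1" "filter ?P W' = [p2]"
    by (auto dest: filter_eq_ConsD)
  moreover from \<open>filter ?P W' = [p2]\<close> obtain B D
    where "W' = B @ p2 # D" "\<forall>p\<in>set B. \<not> ?P p" "?P p2" "filter ?P D = []"
    by (auto dest: filter_eq_ConsD)
  ultimately have W_eq: "W = A @ p1 # B @ p2 # D" and P: "?P p1" "?P p2"
    and not_P: "\<forall>p\<in>set A \<union> set B \<union> set D. \<not> ?P p"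
    by (auto simp: filter_empty_conv)
  have rot1: "rotate (length A) W = p1 # B @ p2 # (D @ A)"
    unfolding W_eq by (simp add: rotate_append)
  have rot2: "rotate (length (A @ p1 # B)) W = p2 # (D @ A) @ p1 # B"
    using rotate_append[of "A @ p1 # B" "p2 # D"] unfolding W_eq by simp
  have "set (rotate (length A) W) = set W" "distinct (rotate (length A) W)"
    using distinct_circuit[OF W(1)] by simp_all
  then consider "\<forall>b\<in>Eb. b \<notin> walk_edges ((fst p2, snd p1) # B)"
    | "\<forall>b\<in>Eb. b \<notin> walk_edges ((fst p1, snd p2) # (D @ A))"
    using shortcut_avoids_base[OF v W _ _ rot1] by blast
  then show ?thesis
  proof cases
    case 1
    have "induced_circuit H E eps Eb C v ((fst p2, snd p1) # B)"
      by (rule induced_circuitI[OF W rot1]) (use P not_P 1 in auto)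
    then show ?thesis ..
  next
    case 2
    have "induced_circuit H E eps Eb C v ((fst p1, snd p2) # (D @ A))"
      by (rule induced_circuitI[OF W rot2]) (use P not_P 2 in auto)
    then show ?thesis ..
  qed
qed

text \<open>A witness for \<open>induced_circuit H E eps Eb C v (Gamma v)\<close>: the Euler circuit \<open>W\<close> of the
  component, rotated to start with the visit \<open>p1\<close> of \<open>v\<close>, and its other visit \<open>p2\<close>.\<close>

definition Gamma_split ::
  "'v \<Rightarrow> ('h \<times> 'h) list \<Rightarrow> nat \<Rightarrow> 'h \<times> 'h \<Rightarrow> ('h \<times> 'h) list \<Rightarrow> 'h \<times> 'h \<Rightarrow> ('h \<times> 'h) list \<Rightarrow> bool"
  where "Gamma_split v W k p1 X p2 Y \<longleftrightarrow> W \<in> C \<and> set (walk_halfedges W) = component v \<and>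
    rotate k W = p1 # X @ p2 # Y \<and> eps (fst p1) = v \<and> eps (fst p2) = v \<and>
    (\<forall>p\<in>set X \<union> set Y. eps (fst p) \<noteq> v) \<and> Gamma v = (fst p2, snd p1) # X \<and>
    (\<forall>e\<in>Eb. e \<notin> walk_edges (Gamma v))"

lemma ex_Gamma_split:
  assumes "v \<in> V"
  shows "\<exists>W k p1 X p2 Y. Gamma_split v W k p1 X p2 Y"
proof -
  have "induced_circuit H E eps Eb C v (Gamma v)"
    unfolding Gamma_EC_def using ex_induced_circuit[OF assms] by (rule someI_ex)
  then show ?thesis unfolding induced_circuit_def Gamma_split_def by blast
qed

lemma Gamma_splitD:
  assumes "Gamma_split v W k p1 X p2 Y"
  shows "W \<in> C" "p1 \<in> set W" "p2 \<in> set W" "set X \<subseteq> set W" "p1 \<noteq> p2"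
    "Gamma v = (fst p2, snd p1) # X" "eps (fst p1) = v" "eps (fst p2) = v"
    "\<forall>p\<in>set X. eps (fst p) \<noteq> v"
proof -
  have R: "rotate k W = p1 # X @ p2 # Y" and W: "W \<in> C"
    using assms unfolding Gamma_split_def by simp_all
  then have "set W = set (p1 # X @ p2 # Y)" "distinct (p1 # X @ p2 # Y)"
    using distinct_circuit[OF W] by (metis set_rotate distinct_rotate)+
  then show "W \<in> C" "p1 \<in> set W" "p2 \<in> set W" "set X \<subseteq> set W" "p1 \<noteq> p2"
    using W by auto
  show "Gamma v = (fst p2, snd p1) # X" "eps (fst p1) = v" "eps (fst p2) = v"
    "\<forall>p\<in>set X. eps (fst p) \<noteq> v"
    using assms unfolding Gamma_split_def by auto
qed

lemma walk_edge_Gamma: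
  assumes "v \<in> V" "i < length (Gamma v)"
  shows "walk_edge (Gamma v) i \<in> E"
proof -
  obtain W k p1 X p2 Y where split: "Gamma_split v W k p1 X p2 Y" using ex_Gamma_split[OF assms(1)] by blast
  then have R: "rotate k W = p1 # X @ p2 # Y" and W: "W \<in> C" unfolding Gamma_split_def by simp_all
  have "length W = length (p1 # X @ p2 # Y)" using R by (metis length_rotate)
  then have i: "i < length W" using assms(2) Gamma_splitD(6)[OF split] by simp
  have "walk_edge (Gamma v) i = walk_edge (rotate k W) i"
    using walk_edge_shortcut_eq[OF Gamma_splitD(6)[OF split] assms(2) R] .
  also have "\<dots> = walk_edge W ((i + k) mod length W)"
    using i by (rule walk_edge_rotate)
  also have "\<dots> \<in> E"
    using W i by (intro walk_edge_in_E) (auto intro: mod_less_divisor)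
  finally show ?thesis .
qed

lemma transition_Gamma:
  assumes "v \<in> V" "p \<in> set (Gamma v)"
  shows "fst p \<in> H \<and> snd p \<in> H \<and> eps (fst p) = eps (snd p)"
proof -
  obtain W k p1 X p2 Y where split: "Gamma_split v W k p1 X p2 Y" using ex_Gamma_split[OF assms(1)] by blast
  note facts = Gamma_splitD[OF split]
  show ?thesis
  proof (cases "p \<in> set X")
    case True
    then show ?thesis using transition_in_system[OF facts(1)] facts(4) by blast
  next
    case False
    then have "p = (fst p2, snd p1)" using assms(2) facts(6) by simp
    then show ?thesis
      using transition_in_system[OF facts(1,2)] transition_in_system[OF facts(1,3)] facts(7,8) by simp
  qed
qed

lemma sigma_Gamma_base:
  assumes "v \<in> V" "b \<in> Eb"
  shows "sigma tail (Gamma v) b = 0"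
proof -
  obtain W k p1 X p2 Y where "Gamma_split v W k p1 X p2 Y" using ex_Gamma_split[OF assms(1)] by blast
  then have "\<forall>i<length (Gamma v). walk_edge (Gamma v) i \<noteq> b"
    using assms(2) unfolding Gamma_split_def walk_edges_def by blast
  then show ?thesis unfolding sigma_def by (intro sum.neutral) auto
qed

lemma Gamma_incidence_eq:
  assumes "v \<in> V"
  shows "(\<Sum>e\<in>E. of_int (sigma tail (Gamma v) e) * incidence tail s e)
    = (\<Sum>p\<leftarrow>Gamma v. of_bool (snd p \<in> s) - of_bool (fst p \<in> s))"
proof -
  obtain W k p1 X p2 Y where "Gamma_split v W k p1 X p2 Y" using ex_Gamma_split[OF assms] by blast
  then have "Gamma v \<noteq> []" using Gamma_splitD(6) by simp
  then have "(\<Sum>e\<in>E. of_int (sigma tail (Gamma v) e) * incidence tail s e)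
      = (\<Sum>i<length (Gamma v). of_bool (snd (Gamma v ! i) \<in> s) - of_bool (fst (Gamma v ! i) \<in> s))"
    using walk_edge_Gamma[OF assms] by (intro sigma_incidence_sum) auto
  then show ?thesis by (simp add: sum_list_sum_nth atLeast0LessThan)
qed

lemma Gamma_incidence_halfedges:
  assumes "v \<in> V"
  shows "(\<Sum>e\<in>E. of_int (sigma tail (Gamma v) e) * incidence tail (halfedges u) e) = 0"
proof -
  show ?thesis
    unfolding Gamma_incidence_eq[OF assms]
    using transition_Gamma[OF assms] by (intro sum_list_0_if_all_0) (auto simp: halfedges_at_def)
qed

text \<open>The transition of the Euler system at \<open>w\<close> whose outgoing half-edge is the first one
  traversed by \<open>Gamma w\<close>.\<close>

definition reference_transition :: "'v \<Rightarrow> 'h set" where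
  "reference_transition w =
    (SOME s. \<exists>W k p1 X p2 Y. Gamma_split w W k p1 X p2 Y \<and> s = {fst p1, snd p1})"

lemma reference_transition_split:
  assumes "w \<in> V"
  obtains W k p1 X p2 Y
  where "Gamma_split w W k p1 X p2 Y" "reference_transition w = {fst p1, snd p1}"
proof -
  have "\<exists>W k p1 X p2 Y. Gamma_split w W k p1 X p2 Y \<and> reference_transition w = {fst p1, snd p1}"
    unfolding reference_transition_def by (rule someI_ex) (use ex_Gamma_split[OF assms] in blast)
  then show ?thesis using that by blast
qed

lemma reference_transition_subset:
  assumes "w \<in> V"
  shows "reference_transition w \<subseteq> halfedges w"
proof -
  obtain W k p1 X p2 Y
    where split: "Gamma_split w W k p1 X p2 Y" and ref: "reference_transition w = {fst p1, snd p1}"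
    using reference_transition_split[OF assms] .
  show ?thesis
    using transition_in_system[OF Gamma_splitD(1,2)[OF split]] Gamma_splitD(7)[OF split]
    unfolding ref halfedges_at_def by auto
qed

lemma Gamma_incidence_reference_self:
  assumes w: "w \<in> V"
  shows "(\<Sum>e\<in>E. of_int (sigma tail (Gamma w) e) * incidence tail (reference_transition w) e) = 1"
proof -
  obtain W k q1 X q2 Y where split: "Gamma_split w W k q1 X q2 Y"
    and ref: "reference_transition w = {fst q1, snd q1}"
    using reference_transition_split[OF w] .
  note facts = Gamma_splitD[OF split]
  let ?s = "reference_transition w"
  have "fst q2 \<noteq> fst q1" "fst q2 \<noteq> snd q1"
    using transitions_disjoint[OF facts(1) facts(1) facts(3) facts(2)] facts(5) by auto
  then have head: "snd q1 \<in> ?s" "fst q2 \<notin> ?s" unfolding ref by auto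
  have "(\<Sum>p\<leftarrow>X. of_bool (snd p \<in> ?s) - of_bool (fst p \<in> ?s)) = (0 :: rat)"
  proof (rule sum_list_0_if_all_0)
    fix p assume "p \<in> set X"
    moreover from this have "p \<in> set W" using facts(4) by auto
    ultimately have "eps (fst p) \<noteq> w" "eps (snd p) = eps (fst p)"
      using facts(9) transition_in_system[OF facts(1)] by auto
    then show "of_bool (snd p \<in> ?s) - of_bool (fst p \<in> ?s) = (0 :: rat)"
      using reference_transition_subset[OF w] unfolding halfedges_at_def by auto
  qed
  then show ?thesis using head unfolding Gamma_incidence_eq[OF w] by (simp add: facts(6))
qed

lemma Gamma_incidence_reference_other:
  assumes v: "v \<in> V" and w: "w \<in> V" and "v \<noteq> w"
  shows "(\<Sum>e\<in>E. of_int (sigma tail (Gamma v) e) * incidence tail (reference_transition w) e) = 0"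
proof -
  obtain W' k' q1 X' q2 Y' where split_w: "Gamma_split w W' k' q1 X' q2 Y'"
    and ref: "reference_transition w = {fst q1, snd q1}"
    using reference_transition_split[OF w] .
  obtain W k p1 X p2 Y where split_v: "Gamma_split v W k p1 X p2 Y"
    using ex_Gamma_split[OF v] by blast
  note fw = Gamma_splitD[OF split_w] and fv = Gamma_splitD[OF split_v]
  let ?s = "reference_transition w"
  have "eps (fst p2) = v" "eps (snd p1) = v"
    using fv(7,8) transition_in_system[OF fv(1,2)] by auto
  then have head: "snd p1 \<notin> ?s" "fst p2 \<notin> ?s"
    using reference_transition_subset[OF w] \<open>v \<noteq> w\<close> unfolding halfedges_at_def by auto
  have "(\<Sum>p\<leftarrow>X. of_bool (snd p \<in> ?s) - of_bool (fst p \<in> ?s)) = (0 :: rat)"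
  proof (rule sum_list_0_if_all_0)
    fix p assume "p \<in> set X"
    then have p: "p \<in> set W" using fv(4) by auto
    have "snd p \<in> ?s \<longleftrightarrow> p = q1" "fst p \<in> ?s \<longleftrightarrow> p = q1"
      using transitions_disjoint[OF fv(1) fw(1) p fw(2)] transitions_disjoint[OF fw(1) fv(1) fw(2) p]
      unfolding ref by auto
    then show "of_bool (snd p \<in> ?s) - of_bool (fst p \<in> ?s) = (0 :: rat)" by simp
  qed
  then show ?thesis using head unfolding Gamma_incidence_eq[OF v] by (simp add: fv(6))
qed

lemma Gamma_incidence_reference:
  assumes "v \<in> V" "w \<in> V"
  shows "(\<Sum>e\<in>E. of_int (sigma tail (Gamma v) e) * incidence tail (reference_transition w) e)
    = of_bool (v = w)"
  using Gamma_incidence_reference_self Gamma_incidence_reference_other assms by (cases "v = w") auto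

section \<open>The determinant\<close>

definition base_vertices :: "'v set" where
  "base_vertices = (\<lambda>b. eps (tail b)) ` Eb"

lemma base_vertices_subset: "base_vertices \<subseteq> V"
  unfolding base_vertices_def using base_subset tail_in_H eps_in_V by blast

lemma card_base_vertices: "card base_vertices = card Eb"
proof -
  have "inj_on (\<lambda>b. eps (tail b)) Eb"
  proof (rule inj_onI)
    fix b1 b2 assume b: "b1 \<in> Eb" "b2 \<in> Eb" "eps (tail b1) = eps (tail b2)"
    then have E: "b1 \<in> E" "b2 \<in> E" using base_subset by auto
    have "\<forall>h\<in>b. connected (eps (tail b)) (eps h)" if "b \<in> E" for b
      using connected_edge[OF that] edge_eq_tail_head(1)[OF that] by blast
    then show "b1 = b2"
      using base_edge_unique[OF eps_in_V[OF tail_in_H[OF E(1)]] b(1,2)] E b(3) by metis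
  qed
  then show ?thesis unfolding base_vertices_def by (rule card_image)
qed

lemma card_nonbase_edges: "card (E - Eb) = card V + card (V - base_vertices)"
proof -
  have "card base_vertices \<le> card V"
    using card_mono[OF finite_V base_vertices_subset] .
  moreover have "card (V - base_vertices) = card V - card base_vertices"
    using finite_subset[OF base_vertices_subset finite_V] base_vertices_subset by (rule card_Diff_subset)
  moreover have "card (E - Eb) = card E - card Eb"
    using finite_Eb base_subset by (rule card_Diff_subset)
  ultimately show ?thesis
    using card_E_if_four_regular[OF four_regular] card_base_vertices by simp
qed

lemma circuit_meets_base_once:
  assumes v: "v \<in> V" and W: "W \<in> C" "set (walk_halfedges W) = component v"
    and ij: "i < length W" "j < length W" "walk_edge W i \<in> Eb" "walk_edge W j \<in> Eb"
  shows "i = j"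
proof -
  have "walk_edge W i = walk_edge W j"
    using base_edge_unique[OF v ij(3,4)] walk_edge_connected[OF W] ij(1,2) by blast
  then show ?thesis using inj_walk_edge[OF W(1) ij(1,2)] by blast
qed

text \<open>Along the Euler circuit of the component of \<open>v\<close>, a function constant across non-base
  edges is constant on all vertices of the component, and the base edge provides a zero.\<close>

lemma potential_eq_0:
  fixes lam :: "'v \<Rightarrow> 'a :: zero"
  assumes across: "\<And>e. e \<in> E - Eb \<Longrightarrow> lam (eps (tail e)) = lam (eps (head e))"
    and base: "\<And>b. b \<in> Eb \<Longrightarrow> lam (eps (tail b)) = 0"
    and v: "v \<in> V"
  shows "lam v = 0"
proof -
  obtain W where W: "W \<in> C" "set (walk_halfedges W) = component v"
    using ex1_circuit[OF v] by blast
  define L where "L = length W"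
  define vert where "vert i = eps (fst (W ! i))" for i
  have L: "0 < L" using circuit_in_system[OF W(1)] unfolding oriented_circuit_def L_def by auto
  obtain i0 where i0: "i0 < L" "\<And>i. i < L \<Longrightarrow> i \<noteq> i0 \<Longrightarrow> walk_edge W i \<notin> Eb"
    using circuit_meets_base_once[OF v W] L unfolding L_def by metis
  have step: "lam (vert i) = lam (vert (Suc i mod L))" if i: "i < L" "i \<noteq> i0" for i
  proof -
    define e where "e = walk_edge W i"
    have e: "e \<in> E - Eb" using walk_edge_in_E[OF W(1)] i0(2) i unfolding e_def L_def by blast
    have "W ! i \<in> set W" using i unfolding L_def by auto
    then have "vert i = eps (snd (W ! i))" using transition_in_system[OF W(1)] unfolding vert_def by simp
    moreover have "{snd (W ! i), fst (W ! (Suc i mod L))} = {tail e, head e}"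
      using edge_eq_tail_head(1)[of e] e unfolding e_def walk_edge_def L_def by simp
    ultimately show ?thesis
      using across[OF e] unfolding vert_def doubleton_eq_iff by metis
  qed
  have const: "lam (vert i) = lam (vert (Suc i0 mod L))" if "i < L" for i
    using cyclic_steps_constant[OF i0(1), of "\<lambda>i. lam (vert i)"] step that by blast
  have on_W: "\<exists>j<L. vert j = eps h" if "h \<in> component v" for h
    using vertex_on_circuit[OF W(1)] W(2) that unfolding vert_def L_def by blast
  have "halfedges v \<noteq> {}" using card_halfedges[OF v] by auto
  then obtain h where "h \<in> halfedges v" by blast
  then obtain j where j: "j < L" "vert j = v"
    using on_W halfedges_subset_component unfolding halfedges_at_def by blast
  obtain b where b: "b \<in> Eb" "\<forall>h\<in>b. connected v (eps h)" using ex_base_edge[OF v] by blast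
  then have "tail b \<in> component v"
    using tail_in_H base_subset edge_eq_tail_head(1) unfolding comp_halfedges_def by blast
  then obtain j' where j': "j' < L" "vert j' = eps (tail b)" using on_W by blast
  have "lam v = lam (vert j')" using const[OF j(1)] const[OF j'(1)] j(2) by simp
  also have "\<dots> = 0" using base[OF b(1)] j'(2) by simp
  finally show ?thesis .
qed

definition column_sets :: "('v \<Rightarrow> 'h set) \<Rightarrow> 'v list \<Rightarrow> 'v list \<Rightarrow> nat \<Rightarrow> 'h set" where
  "column_sets b vs us c = (if c < length vs then b (vs ! c)
    else halfedges (us ! (c - length vs)) - b (us ! (c - length vs)))"

context
  fixes vs us :: "'v list" and es :: "'h set list"
  assumes vs: "distinct vs" "set vs = V"
    and us: "distinct us" "set us = V - base_vertices"
    and es: "distinct es" "set es = E - Eb"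
begin

lemma length_nonbase_edges: "length es = length vs + length us"
  using card_nonbase_edges distinct_card vs us es by metis

lemma sum_nonbase_edges:
  assumes "v \<in> V"
  shows "(\<Sum>j<length es. of_int (sigma tail (Gamma v) (es ! j)) * g (es ! j))
    = (\<Sum>e\<in>E. of_int (sigma tail (Gamma v) e) * g e)"
proof -
  have "(\<Sum>j<length es. of_int (sigma tail (Gamma v) (es ! j)) * g (es ! j))
      = (\<Sum>e\<in>E - Eb. of_int (sigma tail (Gamma v) e) * g e)"
    using sum.reindex_bij_betw[OF bij_betw_nth[OF es(1) refl es(2)[symmetric]],
        of "\<lambda>e. of_int (sigma tail (Gamma v) e) * g e"] by simp
  also have "\<dots> = (\<Sum>e\<in>E. of_int (sigma tail (Gamma v) e) * g e)"
    using sigma_Gamma_base[OF assms] by (intro sum.mono_neutral_left finite_E) auto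
  finally show ?thesis .
qed

lemma ex_position_map: "\<exists>idx. \<forall>l<length us. idx l < length vs \<and> vs ! idx l = us ! l"
proof -
  have "\<forall>l<length us. \<exists>r<length vs. vs ! r = us ! l"
    using us(2) vs(2) nth_mem by (metis DiffD1 in_set_conv_nth)
  then show ?thesis by metis
qed

lemma incidence_vertices_split:
  assumes b: "\<And>w. w \<in> V \<Longrightarrow> b w \<subseteq> halfedges w"
    and l: "l < length us" and idx: "vs ! r = us ! l" "r < length vs"
  shows "incidence tail (halfedges (us ! l)) e
    = incidence tail (column_sets b vs us r) e + incidence tail (column_sets b vs us (length vs + l)) e"
proof -
  have "us ! l \<in> V" using us(2) l nth_mem by blast
  then show ?thesis
    using incidence_Diff[OF b] idx unfolding column_sets_def by simp
qed

lemma det_column_sets_mem: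
  assumes b: "\<And>w. w \<in> V \<Longrightarrow> b w \<subseteq> halfedges w"
  shows "det (mat (length es) (length es) (\<lambda>(j, c). incidence tail (column_sets b vs us c) (es ! j)))
    \<in> {-1, 0, 1}"
proof (rule det_incidence_columns_mem)
  define vertex where "vertex c = (if c < length vs then vs ! c else us ! (c - length vs))" for c
  fix c c' assume c: "c < length es" "c' < length es" "c \<noteq> c'"
  have at_vertex: "column_sets b vs us d \<subseteq> halfedges (vertex d)" for d
  proof (cases "d < length vs")
    case True
    then have "vs ! d \<in> V" using vs(2) nth_mem by blast
    then show ?thesis using b True unfolding column_sets_def vertex_def by simp
  qed (auto simp: column_sets_def vertex_def)
  show "column_sets b vs us c \<inter> column_sets b vs us c' = {}"
  proof (cases "vertex c = vertex c'")
    case False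
    then show ?thesis using at_vertex c halfedges_disjoint by blast
  next
    case True
    consider "c < length vs" "c' < length vs" | "\<not> c < length vs" "\<not> c' < length vs"
      | "c < length vs \<longleftrightarrow> \<not> c' < length vs" by blast
    then show ?thesis
    proof cases
      case 1
      then have "c = c'" using True nth_eq_iff_index_eq[OF vs(1)] unfolding vertex_def by simp
      then show ?thesis using c(3) by contradiction
    next
      case 2
      moreover have "c - length vs < length us" "c' - length vs < length us"
        using c length_nonbase_edges 2 by auto
      ultimately have "c - length vs = c' - length vs"
        using True nth_eq_iff_index_eq[OF us(1)] unfolding vertex_def by simp
      then show ?thesis using c(3) 2 by simp
    next
      case 3
      then show ?thesis using True unfolding column_sets_def vertex_def by auto
    qed
  qed
qed

lemma det_gram_incidence_nonzero:
  "det (mat (length us) (length us) (\<lambda>(l, l'). \<Sum>j<length es.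
      incidence tail (halfedges (us ! l)) (es ! j) * incidence tail (halfedges (us ! l')) (es ! j)))
    \<noteq> 0"
proof (rule det_gram_nonzero)
  fix x :: "nat \<Rightarrow> rat" and l
  assume kernel: "\<forall>j<length es. (\<Sum>l'<length us. incidence tail (halfedges (us ! l')) (es ! j) * x l') = 0"
    and l: "l < length us"
  define lam where "lam w = (\<Sum>l'<length us. of_bool (w = us ! l') * x l')" for w
  have lam_us: "lam (us ! l') = x l'" if "l' < length us" for l'
  proof -
    have "lam (us ! l') = (\<Sum>l''<length us. if l'' = l' then x l'' else 0)"
      unfolding lam_def using nth_eq_iff_index_eq[OF us(1) that] by (intro sum.cong refl) auto
    then show ?thesis using that by simp
  qed
  have "lam (eps (tail e)) = lam (eps (head e))" if "e \<in> E - Eb" for e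
  proof -
    have "e \<in> set es" using es(2) that by simp
    then obtain j where j: "j < length es" "es ! j = e" by (auto simp: in_set_conv_nth)
    have "incidence tail (halfedges u) e = of_bool (eps (tail e) = u) - of_bool (eps (head e) = u)"
      for u using tail_in_H head_in_H that unfolding incidence_def halfedges_at_def by auto
    then have "(\<Sum>l'<length us. incidence tail (halfedges (us ! l')) e * x l')
        = (\<Sum>l'<length us. of_bool (eps (tail e) = us ! l') * x l' - of_bool (eps (head e) = us ! l') * x l')"
      by (simp add: left_diff_distrib)
    also have "\<dots> = lam (eps (tail e)) - lam (eps (head e))"
      unfolding lam_def by (rule sum_subtractf)
    finally have "(\<Sum>l'<length us. incidence tail (halfedges (us ! l')) e * x l')
        = lam (eps (tail e)) - lam (eps (head e))" .
    then show ?thesis using kernel j by force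
  qed
  moreover have "lam (eps (tail b)) = 0" if "b \<in> Eb" for b
  proof -
    have "eps (tail b) \<notin> set us" using us(2) that unfolding base_vertices_def by auto
    then show ?thesis unfolding lam_def using nth_mem by (intro sum.neutral) fastforce
  qed
  moreover have "us ! l \<in> V" using us(2) l nth_mem by blast
  ultimately have "lam (us ! l) = 0" by (rule potential_eq_0)
  then show "x l = 0" using lam_us[OF l] by simp
qed

lemma det_circuit_incidence_mem:
  assumes a: "\<And>w. w \<in> V \<Longrightarrow> a w \<subseteq> halfedges w"
  shows "det (mat (length vs) (length vs) (\<lambda>(r, c).
      \<Sum>e\<in>E. of_int (sigma tail (Gamma (vs ! r)) e) * incidence tail (a (vs ! c)) e)) \<in> {-1, 0, 1}"
proof -
  obtain idx where idx: "\<And>l. l < length us \<Longrightarrow> idx l < length vs \<and> vs ! idx l = us ! l"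
    using ex_position_map by blast
  define X where "X r j = (of_int (sigma tail (Gamma (vs ! r)) (es ! j)) :: rat)" for r j
  define Y where "Y j l = incidence tail (halfedges (us ! l)) (es ! j)" for j l
  define K where "K b j c = incidence tail (column_sets b vs us c) (es ! j)" for b j c
  have vs_V: "vs ! r \<in> V" if "r < length vs" for r using vs(2) that by auto
  have XK: "(\<Sum>j<length es. X r j * K b j c)
      = (\<Sum>e\<in>E. of_int (sigma tail (Gamma (vs ! r)) e) * incidence tail (b (vs ! c)) e)"
    if "r < length vs" "c < length vs" for b r c
    using sum_nonbase_edges[OF vs_V[OF that(1)]] that(2) unfolding X_def K_def column_sets_def by simp
  have "det (mat (length vs) (length vs) (\<lambda>(r, c). \<Sum>j<length es. X r j * K a j c)) \<in> {-1, 0, 1}"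
  proof (rule det_mult_mem_if_reference_splitting[where Y = Y and K' = "K reference_transition"])
    show "length es = length vs + length us" by (rule length_nonbase_edges)
    show "idx l < length vs" if "l < length us" for l using idx[OF that] by blast
    show "(\<Sum>j<length es. X r j * Y j l) = 0" if "r < length vs" "l < length us" for r l
      using sum_nonbase_edges[OF vs_V[OF that(1)], of "incidence tail (halfedges (us ! l))"]
        Gamma_incidence_halfedges[OF vs_V[OF that(1)], of "us ! l"]
      unfolding X_def Y_def by simp
    show "det (mat (length us) (length us) (\<lambda>(l, l'). \<Sum>j<length es. Y j l * Y j l')) \<noteq> 0"
      using det_gram_incidence_nonzero unfolding Y_def .
    have split: "Y j l = K b j (idx l) + K b j (length vs + l)"
      if "\<And>w. w \<in> V \<Longrightarrow> b w \<subseteq> halfedges w" "l < length us" for b j l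
      using incidence_vertices_split[OF that(1,2)] idx[OF that(2)] unfolding Y_def K_def by metis
    show "Y j l = K a j (idx l) + K a j (length vs + l)"
      and "Y j l = K reference_transition j (idx l) + K reference_transition j (length vs + l)"
      if "l < length us" for j l
      using split a reference_transition_subset that by blast+
    show "mat (length vs) (length vs) (\<lambda>(r, c). \<Sum>j<length es. X r j * K reference_transition j c)
        = 1\<^sub>m (length vs)"
      by (rule eq_matI) (auto simp: XK Gamma_incidence_reference vs_V nth_eq_iff_index_eq[OF vs(1)])
    show "det (mat (length es) (length es) (\<lambda>(j, c). K a j c)) \<in> {-1, 0, 1}"
      and "det (mat (length es) (length es) (\<lambda>(j, c). K reference_transition j c)) \<in> {-1, 0, 1}"
      using det_column_sets_mem a reference_transition_subset unfolding K_def by blast+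
  qed
  moreover have "mat (length vs) (length vs) (\<lambda>(r, c). \<Sum>j<length es. X r j * K a j c)
      = mat (length vs) (length vs) (\<lambda>(r, c).
          \<Sum>e\<in>E. of_int (sigma tail (Gamma (vs ! r)) e) * incidence tail (a (vs ! c)) e)"
    by (rule eq_matI) (simp_all add: XK)
  ultimately show ?thesis by simp
qed

end


theorem det_Gamma_incidence_mem:
  assumes "\<And>w. w \<in> V \<Longrightarrow> a w \<subseteq> halfedges w"
  shows "det_on V (\<lambda>v w. \<Sum>e\<in>E. of_int (sigma tail (Gamma v) e) * incidence tail (a w) e)
    \<in> {-1, 0, 1}"
proof -
  obtain vs where vs: "distinct vs" "set vs = V" using finite_distinct_list[OF finite_V] by metis
  obtain us where us: "distinct us" "set us = V - base_vertices"
    using finite_distinct_list[of "V - base_vertices"] finite_V by blast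
  obtain es where es: "distinct es" "set es = E - Eb"
    using finite_distinct_list[of "E - Eb"] finite_E by blast
  have "bij_betw ((!) vs) {0..<length vs} V"
    by (rule bij_betw_nth[OF vs(1) atLeast0LessThan vs(2)[symmetric]])
  then show ?thesis
    using det_circuit_incidence_mem[OF vs us es assms] by (simp add: det_on_eq_det_mat)
qed

end

lemma transversal_orientation_subset:
  assumes "transversal V H eps T" "transitional_orientation V H eps ori" "w \<in> V"
  shows "ori (THE t. t \<in> T \<and> transition_at H eps w t) \<subseteq> halfedges_at H eps w"
proof -
  define t where "t = (THE t. t \<in> T \<and> transition_at H eps w t)"
  have "\<exists>!t. t \<in> T \<and> transition_at H eps w t" using assms(1,3) unfolding transversal_def by blast
  then have t: "t \<in> T \<and> transition_at H eps w t" unfolding t_def by (rule theI')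
  then have "t \<in> transitions V H eps" using assms(1) unfolding transversal_def by blast
  then have "ori t \<in> t" using assms(2) unfolding transitional_orientation_def by blast
  moreover obtain s1 s2 where "t = {s1, s2}" "s1 \<union> s2 = halfedges_at H eps w"
    using t unfolding transition_at_def by blast
  ultimately show ?thesis unfolding t_def[symmetric] by auto
qed

theorem mainTheorem18:
  fixes V :: "'v set" and H :: "'h set" and E :: "'h set set" and eps :: "'h \<Rightarrow> 'v"
    and Eb :: "'h set set" and C :: "('h \<times> 'h) list set" and tail :: "'h set \<Rightarrow> 'h"
    and ori :: "'h set set \<Rightarrow> 'h set" and T :: "'h set set set"
  assumes "is_graph V H E eps"
    and "four_regular V H eps"
    and "based V E eps Eb"
    and "oriented_euler_system V H E eps C"
    and "directed_version E tail"
    and "transitional_orientation V H eps ori"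
    and "transversal V H eps T"
  shows "det_on V (submatrix_T H eps T (CM_Delta H E eps Eb C tail ori)) \<in> {-1, 0, 1}"
proof -
  interpret based_euler_system V H E eps tail C Eb
    using assms by unfold_locales
  let ?t = "\<lambda>w. THE t. t \<in> T \<and> transition_at H eps w t"
  have "det_on V (submatrix_T H eps T (CM_Delta H E eps Eb C tail ori))
      = det_on V (\<lambda>v w. \<Sum>e\<in>E. of_int (sigma tail (Gamma v) e) * incidence tail (ori (?t w)) e)"
    unfolding submatrix_T_def CM_Delta_def using Delta_eq_incidence
    by (intro det_on_cong sum.cong) simp_all
  also have "\<dots> \<in> {-1, 0, 1}"
    using transversal_orientation_subset[OF assms(7,6)] by (rule det_Gamma_incidence_mem)
  finally show ?thesis .
qed

end
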